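(* For $1<p<\infty$, the Banach lattice $\ell_p$ (with coordinatewise order) contains a basis $(u_i)$ of $\ell_p$ which is equivalent to the canonical basis $(e_i)$ of $\ell_p$ and which is neither bibasic nor uniformly quasi-greedy.
   Context: A sequence $(x_k)$ of nonzero vectors in a Banach lattice is bibasic if there is $M\ge1$ with $\|\bigvee_{n=1}^m|\sum_{k=1}^na_kx_k|\|\le M\|\sum_{k=1}^ma_kx_k\|$ for all $m$ and scalars $a_k$. A semi-normalized basic sequence $(x_k)$ with span $E$ and biorthogonal functionals $x_k^*$ is uniformly quasi-greedy if $\sup_m\sup_{x\in E,\|x\|=1}\|\bigvee_{n=1}^m|\mathcal{G}_n(x)|\|<\infty$, where $\mathcal{G}_n(x)=\sum_{j=1}^n x^*_{\rho(j)}(x)x_{\rho(j)}$ and $\rho$ is the natural greedy ordering of $x$ (indices listed by non-increasing $|x_k^*(x)|$, ties broken by increasing index). *)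

theory Defs
  imports "HOL-Analysis.Analysis"
begin

definition lp :: "real \<Rightarrow> (nat \<Rightarrow> real) set" where
  "lp p = {x. summable (\<lambda>i. \<bar>x i\<bar> powr p)}"

definition lp_norm :: "real \<Rightarrow> (nat \<Rightarrow> real) \<Rightarrow> real" where
  "lp_norm p x = (\<Sum>i. \<bar>x i\<bar> powr p) powr (1 / p)"

definition canon_basis :: "nat \<Rightarrow> nat \<Rightarrow> real" where
  "canon_basis k = (\<lambda>i. if i = k then 1 else 0)"

definition lincomb :: "(nat \<Rightarrow> real) \<Rightarrow> (nat \<Rightarrow> nat \<Rightarrow> real) \<Rightarrow> nat \<Rightarrow> nat \<Rightarrow> real" where
  "lincomb a u n = (\<lambda>i. \<Sum>k<n. a k * u k i)"

definition has_expansion :: "real \<Rightarrow> (nat \<Rightarrow> nat \<Rightarrow> real) \<Rightarrow> (nat \<Rightarrow> real) \<Rightarrow> (nat \<Rightarrow> real) \<Rightarrow> bool" where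
  "has_expansion p u x a \<longleftrightarrow> (\<lambda>n. lp_norm p (\<lambda>i. x i - lincomb a u n i)) \<longlonglongrightarrow> 0"

definition schauder_basis :: "real \<Rightarrow> (nat \<Rightarrow> nat \<Rightarrow> real) \<Rightarrow> bool" where
  "schauder_basis p u \<longleftrightarrow> (\<forall>k. u k \<in> lp p) \<and>
     (\<forall>x \<in> lp p. \<exists>!a. has_expansion p u x a)"

definition equivalent_seq :: "real \<Rightarrow> (nat \<Rightarrow> nat \<Rightarrow> real) \<Rightarrow> (nat \<Rightarrow> nat \<Rightarrow> real) \<Rightarrow> bool" where
  "equivalent_seq p u v \<longleftrightarrow> (\<exists>C>0. \<forall>a m.
      lp_norm p (lincomb a u m) \<le> C * lp_norm p (lincomb a v m) \<and>
      lp_norm p (lincomb a v m) \<le> C * lp_norm p (lincomb a u m))"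

text \<open>Bibasic (indices start at 0): there is M >= 1 with
  || max_{n<=m} |sum_{k<=n} a_k x_k| || <= M || sum_{k<=m} a_k x_k ||, lattice operations coordinatewise.\<close>
definition bibasic :: "real \<Rightarrow> (nat \<Rightarrow> nat \<Rightarrow> real) \<Rightarrow> bool" where
  "bibasic p x \<longleftrightarrow> (\<forall>k. x k \<noteq> (\<lambda>i. 0)) \<and>
     (\<exists>M\<ge>1. \<forall>m a.
        lp_norm p (\<lambda>i. Max ((\<lambda>n. \<bar>lincomb a x (Suc n) i\<bar>) ` {..m}))
          \<le> M * lp_norm p (lincomb a x (Suc m)))"

text \<open>Biorthogonal coefficient functionals on the closed span (= set of elements with an expansion).\<close>
definition coef :: "real \<Rightarrow> (nat \<Rightarrow> nat \<Rightarrow> real) \<Rightarrow> (nat \<Rightarrow> real) \<Rightarrow> nat \<Rightarrow> real" where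
  "coef p u x = (THE a. has_expansion p u x a)"

definition greedy_prec :: "(nat \<Rightarrow> real) \<Rightarrow> nat \<Rightarrow> nat \<Rightarrow> bool" where
  "greedy_prec c j k \<longleftrightarrow> \<bar>c j\<bar> > \<bar>c k\<bar> \<or> (\<bar>c j\<bar> = \<bar>c k\<bar> \<and> j < k)"

text \<open>The first n indices rho(1),...,rho(n) of the natural greedy ordering.\<close>
definition greedy_set :: "(nat \<Rightarrow> real) \<Rightarrow> nat \<Rightarrow> nat set" where
  "greedy_set c n = {k. finite {j. greedy_prec c j k} \<and> card {j. greedy_prec c j k} < n}"

definition greedy_sum :: "real \<Rightarrow> (nat \<Rightarrow> nat \<Rightarrow> real) \<Rightarrow> nat \<Rightarrow> (nat \<Rightarrow> real) \<Rightarrow> nat \<Rightarrow> real" where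
  "greedy_sum p u n x = (\<lambda>i. \<Sum>k\<in>greedy_set (coef p u x) n. coef p u x k * u k i)"

text \<open>Uniform quasi-greedy bound (the standing assumption "semi-normalized basic
  sequence" is not part of this predicate; in the theorem it follows from the other conjuncts).\<close>
definition uniformly_quasi_greedy :: "real \<Rightarrow> (nat \<Rightarrow> nat \<Rightarrow> real) \<Rightarrow> bool" where
  "uniformly_quasi_greedy p u \<longleftrightarrow> (\<exists>B. \<forall>m\<ge>1. \<forall>x.
      x \<in> lp p \<and> (\<exists>a. has_expansion p u x a) \<and> lp_norm p x = 1 \<longrightarrow>
      lp_norm p (\<lambda>i. Max ((\<lambda>n. \<bar>greedy_sum p u n x i\<bar>) ` {1..m})) \<le> B)"

end

theory Submission
  imports Defs
begin

(* Split l_p into consecutive finite blocks and let G act on block k by a matrix G_k whose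
   range lies in coordinates where G_k vanishes (so G^2 = 0), with norm at most 1 on l_p.
   Then T = I + G is an isomorphism with inverse I - G, and u_n = T e_n is a basis equivalent
   to the unit vector basis, with coefficient functionals x |-> (I - G) x.

   Block k has 2^k "position" coordinates and one coordinate for each copy of a rescaled Haar
   function on {0, ..., 2^k - 1}.  For p >= 2, G_k sends a vector on the positions to its Haar
   coefficients (a contraction by Clarkson's inequality); for p <= 2, G_k is the transpose
   (a contraction by duality).  For a suitable flat vector 1_S, the norm of T 1_S stays
   comparable to that of 1_S, because Haar functions have mean zero (for p >= 2) or because
   rows of opposite sign cancel (for p <= 2).  But suitable partial sums of its expansion,
   read at each coordinate, are larger by a factor that grows with k.  Since the greedy sums
   of a flat vector are its partial sums, the same vectors show that u is not uniformly
   quasi-greedy. *)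

lemma powr_superadditive:
  fixes a b s :: real
  assumes "a \<ge> 0" "b \<ge> 0" "s \<ge> 1"
  shows "a powr s + b powr s \<le> (a + b) powr s"
proof (cases "a + b = 0")
  case True
  then have "a = 0" "b = 0" using assms by auto
  then show ?thesis by simp
next
  case False
  then have ab: "a + b > 0" using assms by auto
  have split: "x powr s = x * x powr (s - 1)" if "x \<ge> 0" for x :: real
    using that by (cases "x = 0") (auto simp: powr_diff)
  have "a powr s \<le> a * (a + b) powr (s - 1)" "b powr s \<le> b * (a + b) powr (s - 1)"
    using split[of a] split[of b] assms by (auto intro!: mult_left_mono powr_mono2)
  then have "a powr s + b powr s \<le> (a + b) * (a + b) powr (s - 1)"
    by (simp add: distrib_right)
  also have "\<dots> = (a + b) powr s" using split[of "a + b"] ab by simp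
  finally show ?thesis .
qed

lemma powr_midpoint_convex:
  fixes a b s :: real
  assumes "a \<ge> 0" "b \<ge> 0" "s \<ge> 1"
  shows "((a + b) / 2) powr s \<le> (a powr s + b powr s) / 2"
proof (cases "a > 0 \<and> b > 0")
  case True
  from convex_onD[OF powr_convex[OF assms(3)], of "1/2" a b] True
  show ?thesis by (simp add: field_simps)
next
  case False
  have half: "(x / 2) powr s \<le> x powr s / 2" if "x \<ge> 0" for x :: real
  proof -
    have "(2::real) \<le> 2 powr s" using powr_mono[of 1 s 2] assms by simp
    then have "x powr s / 2 powr s \<le> x powr s / 2" by (intro divide_left_mono) auto
    then show ?thesis using that by (simp add: powr_divide)
  qed
  from False assms consider "a = 0" | "b = 0" by fastforce
  then show ?thesis using half[of a] half[of b] assms by cases simp_all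
qed

lemma clarkson_inequality:
  fixes x y r :: real
  assumes "r \<ge> 2"
  shows "\<bar>(x + y) / 2\<bar> powr r + \<bar>(x - y) / 2\<bar> powr r \<le> (\<bar>x\<bar> powr r + \<bar>y\<bar> powr r) / 2"
proof -
  define s where "s = r / 2"
  have s1: "s \<ge> 1" using assms by (simp add: s_def)
  have sq: "\<bar>z\<bar> powr r = (z\<^sup>2) powr s" for z :: real
  proof -
    have "z\<^sup>2 = \<bar>z\<bar> powr 2" by (cases "z = 0") (auto simp: powr_numeral)
    then have "(z\<^sup>2) powr s = (\<bar>z\<bar> powr 2) powr s" by simp
    also have "\<dots> = \<bar>z\<bar> powr r" by (simp only: powr_powr s_def) simp
    finally show ?thesis by simp
  qed
  have "\<bar>(x + y) / 2\<bar> powr r + \<bar>(x - y) / 2\<bar> powr r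
        = (((x + y) / 2)\<^sup>2) powr s + (((x - y) / 2)\<^sup>2) powr s" by (simp only: sq)
  also have "\<dots> \<le> (((x + y) / 2)\<^sup>2 + ((x - y) / 2)\<^sup>2) powr s"
    by (rule powr_superadditive) (use s1 in auto)
  also have "((x + y) / 2)\<^sup>2 + ((x - y) / 2)\<^sup>2 = (x\<^sup>2 + y\<^sup>2) / 2"
    by (simp add: power2_eq_square field_simps)
  also have "((x\<^sup>2 + y\<^sup>2) / 2) powr s \<le> ((x\<^sup>2) powr s + (y\<^sup>2) powr s) / 2"
    by (rule powr_midpoint_convex) (use s1 in auto)
  also have "\<dots> = (\<bar>x\<bar> powr r + \<bar>y\<bar> powr r) / 2" by (simp only: sq)
  finally show ?thesis .
qed

lemma abs_add_powr_le:
  fixes s t p :: real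
  assumes "p > 0"
  shows "\<bar>s + t\<bar> powr p \<le> 2 powr p * (\<bar>s\<bar> powr p + \<bar>t\<bar> powr p)"
proof -
  have "\<bar>s + t\<bar> powr p \<le> (2 * max \<bar>s\<bar> \<bar>t\<bar>) powr p"
    using assms by (intro powr_mono2) auto
  also have "\<dots> = 2 powr p * (max \<bar>s\<bar> \<bar>t\<bar>) powr p" by (simp add: powr_mult)
  also have "(max \<bar>s\<bar> \<bar>t\<bar>) powr p \<le> \<bar>s\<bar> powr p + \<bar>t\<bar> powr p"
    by (cases "\<bar>s\<bar> \<le> \<bar>t\<bar>") (auto simp: max_def)
  finally show ?thesis by (simp add: mult_left_mono)
qed

lemma holder_inequality_sum:
  fixes f g :: "'a \<Rightarrow> real" and p q :: real
  assumes fin: "finite S" and pq: "p > 1" "q > 1" "1/p + 1/q = 1"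
    and f0: "\<And>i. i \<in> S \<Longrightarrow> f i \<ge> 0" and g0: "\<And>i. i \<in> S \<Longrightarrow> g i \<ge> 0"
  shows "(\<Sum>i\<in>S. f i * g i) \<le> (\<Sum>i\<in>S. f i powr p) powr (1/p) * (\<Sum>i\<in>S. g i powr q) powr (1/q)"
proof -
  define A where "A = (\<Sum>i\<in>S. f i powr p)"
  define B where "B = (\<Sum>i\<in>S. g i powr q)"
  have "A \<ge> 0" "B \<ge> 0" unfolding A_def B_def by (auto intro!: sum_nonneg)
  show ?thesis
  proof (cases "A = 0 \<or> B = 0")
    case True
    then have "(\<forall>i\<in>S. f i = 0) \<or> (\<forall>i\<in>S. g i = 0)"
      using fin by (auto simp: A_def B_def sum_nonneg_eq_0_iff)
    then have "(\<Sum>i\<in>S. f i * g i) = 0" by auto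
    then show ?thesis using True by (auto simp: A_def[symmetric] B_def[symmetric])
  next
    case False
    then have Ap: "A > 0" and Bp: "B > 0" using \<open>A \<ge> 0\<close> \<open>B \<ge> 0\<close> by auto
    define a where "a = A powr (1/p)"
    define b where "b = B powr (1/q)"
    have ap: "a > 0" and bp: "b > 0" using Ap Bp by (auto simp: a_def b_def)
    have apow: "a powr p = A" using Ap pq by (simp add: a_def powr_powr)
    have bpow: "b powr q = B" using Bp pq by (simp add: b_def powr_powr)
    have "(\<Sum>i\<in>S. (f i / a) * (g i / b)) \<le> (\<Sum>i\<in>S. (f i / a) powr p / p + (g i / b) powr q / q)"
      using f0 g0 ap bp pq by (intro sum_mono Youngs_inequality) auto
    also have "\<dots> = A / (a powr p) / p + B / (b powr q) / q"
      using f0 g0 ap bp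
      by (simp add: sum.distrib powr_divide sum_divide_distrib A_def B_def)
    also have "\<dots> = 1" using Ap Bp pq by (simp add: apow bpow)
    finally have "(\<Sum>i\<in>S. f i * g i) / (a * b) \<le> 1"
      by (simp add: sum_divide_distrib[symmetric] field_simps)
    then show ?thesis using ap bp by (simp add: a_def[symmetric] b_def[symmetric] A_def[symmetric] B_def[symmetric] field_simps)
  qed
qed

lemma power_mean_inequality:
  fixes z :: "'a \<Rightarrow> real" and p :: real
  assumes "finite S" "p > 1" "\<And>i. i \<in> S \<Longrightarrow> z i \<ge> 0"
  shows "(\<Sum>i\<in>S. z i) powr p \<le> real (card S) powr (p - 1) * (\<Sum>i\<in>S. z i powr p)"
proof -
  define q where "q = p / (p - 1)"
  have pq: "1/p + 1/q = 1" "q > 1" using assms by (simp_all add: q_def field_simps)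
  have "(\<Sum>i\<in>S. z i * 1) \<le> (\<Sum>i\<in>S. z i powr p) powr (1/p) * (\<Sum>i\<in>S. (1::real) powr q) powr (1/q)"
    by (rule holder_inequality_sum) (use assms pq in auto)
  then have h: "(\<Sum>i\<in>S. z i) \<le> (\<Sum>i\<in>S. z i powr p) powr (1/p) * real (card S) powr (1/q)" by simp
  have "(\<Sum>i\<in>S. z i) powr p \<le> ((\<Sum>i\<in>S. z i powr p) powr (1/p) * real (card S) powr (1/q)) powr p"
    using h assms by (intro powr_mono2) (auto intro!: sum_nonneg)
  also have "\<dots> = (\<Sum>i\<in>S. z i powr p) * real (card S) powr (p / q)"
    using assms by (simp add: powr_mult powr_powr sum_nonneg)
  also have "p / q = p - 1" using assms by (simp add: q_def)
  finally show ?thesis by (simp add: mult.commute)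
qed

lemma le_if_le_powr_mult_powr:
  fixes Z B p q :: real
  assumes "0 \<le> Z" "0 \<le> B" "p > 1" "1/p + 1/q = 1" "Z \<le> B powr (1/p) * Z powr (1/q)"
  shows "Z \<le> B"
proof (cases "Z = 0")
  case False
  then have Zp: "Z > 0" using assms(1) by simp
  have "Z powr (1/p) * Z powr (1/q) \<le> B powr (1/p) * Z powr (1/q)"
    using assms(4,5) Zp by (simp add: powr_add[symmetric])
  then have "Z powr (1/p) \<le> B powr (1/p)" using Zp by simp
  then show ?thesis using powr_less_mono2[of "1/p" B Z] assms(2,3) by force
qed (use assms(2) in simp)

lemma transpose_contraction:
  fixes K :: "'y \<Rightarrow> 'x \<Rightarrow> real" and p q :: real
  assumes X: "finite X" and Y: "finite Y" and pq: "p > 1" "1/p + 1/q = 1"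
    and K: "\<And>a. (\<Sum>y\<in>Y. \<bar>\<Sum>x\<in>X. K y x * a x\<bar> powr q) \<le> (\<Sum>x\<in>X. \<bar>a x\<bar> powr q)"
  shows "(\<Sum>x\<in>X. \<bar>\<Sum>y\<in>Y. K y x * b y\<bar> powr p) \<le> (\<Sum>y\<in>Y. \<bar>b y\<bar> powr p)"
proof -
  have q1: "q > 1" and pq1: "(p - 1) * q = p"
  proof -
    have "1/q = (p - 1) / p" using pq by (simp add: field_simps)
    then have q: "q = p / (p - 1)" using pq by (metis divide_divide_eq_right div_by_1 divide_inverse inverse_divide mult.left_neutral)
    show "q > 1" using pq(1) by (simp add: q field_simps)
    show "(p - 1) * q = p" using pq(1) by (simp add: q)
  qed
  define z where "z x = (\<Sum>y\<in>Y. K y x * b y)" for x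
  \<comment> \<open>the norming functional of \<open>z\<close> in \<open>\<ell>\<^sub>q\<close>\<close>
  define w where "w x = sgn (z x) * \<bar>z x\<bar> powr (p - 1)" for x
  define Z where "Z = (\<Sum>x\<in>X. \<bar>z x\<bar> powr p)"
  define B where "B = (\<Sum>y\<in>Y. \<bar>b y\<bar> powr p)"
  have "Z \<ge> 0" "B \<ge> 0" by (auto simp: Z_def B_def intro!: sum_nonneg)
  have zw: "z x * w x = \<bar>z x\<bar> powr p" for x
  proof (cases "z x = 0")
    case False
    have "\<bar>z x\<bar> powr p = \<bar>z x\<bar> powr (1 + (p - 1))" by simp
    also have "\<dots> = \<bar>z x\<bar> powr 1 * \<bar>z x\<bar> powr (p - 1)" by (rule powr_add)
    also have "\<bar>z x\<bar> powr 1 = \<bar>z x\<bar>" using False by simp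
    finally have "\<bar>z x\<bar> powr p = \<bar>z x\<bar> * \<bar>z x\<bar> powr (p - 1)" .
    moreover have "z x * sgn (z x) = \<bar>z x\<bar>" by (simp add: abs_sgn mult.commute)
    ultimately show ?thesis using False by (simp add: w_def mult.assoc[symmetric])
  qed (simp add: w_def)
  have wq: "\<bar>w x\<bar> powr q = \<bar>z x\<bar> powr p" for x
  proof -
    have "\<bar>w x\<bar> = \<bar>z x\<bar> powr (p - 1)"
      by (cases "z x = 0") (auto simp: w_def abs_mult abs_sgn_eq)
    then show ?thesis using pq1 by (simp add: powr_powr)
  qed
  have "Z = (\<Sum>x\<in>X. z x * w x)" by (simp add: Z_def zw)
  also have "\<dots> = (\<Sum>y\<in>Y. b y * (\<Sum>x\<in>X. K y x * w x))"
    unfolding z_def sum_distrib_right sum_distrib_left by (subst sum.swap) (simp add: mult_ac)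
  also have "\<dots> \<le> (\<Sum>y\<in>Y. \<bar>b y\<bar> * \<bar>\<Sum>x\<in>X. K y x * w x\<bar>)"
    by (intro sum_mono) (simp add: abs_mult[symmetric])
  also have "\<dots> \<le> B powr (1/p) * (\<Sum>y\<in>Y. \<bar>\<Sum>x\<in>X. K y x * w x\<bar> powr q) powr (1/q)"
    unfolding B_def by (rule holder_inequality_sum) (use Y pq q1 in auto)
  also have "\<dots> \<le> B powr (1/p) * (\<Sum>x\<in>X. \<bar>w x\<bar> powr q) powr (1/q)"
    using K[of w] q1 by (intro mult_left_mono powr_mono2) (auto intro!: sum_nonneg)
  also have "(\<Sum>x\<in>X. \<bar>w x\<bar> powr q) = Z" by (simp add: wq Z_def)
  finally have "Z \<le> B powr (1/p) * Z powr (1/q)" .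
  then have "Z \<le> B" using le_if_le_powr_mult_powr \<open>Z \<ge> 0\<close> \<open>B \<ge> 0\<close> pq by blast
  then show ?thesis by (simp add: Z_def B_def z_def)
qed

lemma ex_nat_powr_ge:
  fixes C e :: real
  assumes "0 < e"
  shows "\<exists>k::nat. 0 < k \<and> C \<le> real k powr e"
proof -
  obtain n :: nat where n: "max C 0 powr (1/e) < real n" using reals_Archimedean2 by blast
  have "C \<le> (max C 0 powr (1/e)) powr e"
    using assms by (cases "C > 0") (simp_all add: powr_powr max_def)
  also have "\<dots> \<le> real (Suc n) powr e" using n assms by (intro powr_mono2) auto
  finally show ?thesis by (intro exI[of _ "Suc n"]) simp
qed

lemma sum_lessThan_add:
  fixes a b :: nat
  shows "(\<Sum>j<a + b. f j) = (\<Sum>j<a. f j) + (\<Sum>r<b. f (a + r))"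
  by (induction b) (simp_all add: add.assoc)

lemma sum_lessThan_mult:
  fixes A B :: nat
  shows "(\<Sum>y<A * B. f y) = (\<Sum>a<A. \<Sum>b<B. f (a * B + b))"
proof (induction A)
  case (Suc A)
  have "(\<Sum>y<Suc A * B. f y) = (\<Sum>y<A * B + B. f y)" by (simp add: add.commute)
  also have "\<dots> = (\<Sum>y<A * B. f y) + (\<Sum>b<B. f (A * B + b))" by (rule sum_lessThan_add)
  finally show ?case using Suc by simp
qed simp

lemma sum_lessThan_vanishing_tail:
  fixes A B :: nat
  assumes "A \<le> B" "\<And>j. A \<le> j \<Longrightarrow> j < B \<Longrightarrow> f j = 0"
  shows "(\<Sum>j<B. f j) = (\<Sum>j<A. f j)"
proof -
  have "(\<Sum>j<B. f j) = (\<Sum>j<A. f j) + (\<Sum>r<B - A. f (A + r))"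
    using sum_lessThan_add[where a=A and b="B - A"] assms(1) by simp
  also have "(\<Sum>r<B - A. f (A + r)) = 0" using assms by (intro sum.neutral) auto
  finally show ?thesis by simp
qed

lemma sum_if_mem_subset:
  assumes "B \<subseteq> A" "finite A"
  shows "(\<Sum>x\<in>A. if x \<in> B then f x else 0) = sum f B"
  using assms by (simp add: sum.inter_restrict[symmetric] Int_absorb1)

section \<open>Finite blocks in \<open>\<ell>\<^sub>p\<close>\<close>

lemma lp_norm_finite_support:
  fixes A :: nat
  assumes "\<And>i. A \<le> i \<Longrightarrow> f i = 0"
  shows "lp_norm p f = (\<Sum>i<A. \<bar>f i\<bar> powr p) powr (1/p)"
proof -
  have "(\<Sum>i. \<bar>f i\<bar> powr p) = (\<Sum>i<A. \<bar>f i\<bar> powr p)"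
    by (rule suminf_finite) (use assms in auto)
  then show ?thesis by (simp add: lp_norm_def)
qed

lemma lp_finite_support:
  fixes A :: nat
  assumes "\<And>i. A \<le> i \<Longrightarrow> f i = 0"
  shows "f \<in> lp p"
  unfolding lp_def by (intro CollectI summable_finite[of "{..<A}"]) (use assms in auto)

lemma abs_le_lp_norm:
  assumes "p > 0" "summable (\<lambda>j. \<bar>d j\<bar> powr p)"
  shows "\<bar>d i\<bar> \<le> lp_norm p d"
proof -
  have "(\<Sum>j\<in>{i}. \<bar>d j\<bar> powr p) \<le> (\<Sum>j. \<bar>d j\<bar> powr p)"
    by (rule sum_le_suminf[OF assms(2)]) auto
  then have "(\<bar>d i\<bar> powr p) powr (1/p) \<le> (\<Sum>j. \<bar>d j\<bar> powr p) powr (1/p)"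
    using assms by (intro powr_mono2) auto
  then show ?thesis using assms by (simp add: powr_powr lp_norm_def)
qed

lemma summable_powr_diff:
  fixes f g :: "nat \<Rightarrow> real" and p :: real
  assumes "p > 0" "summable (\<lambda>i. \<bar>f i\<bar> powr p)" "summable (\<lambda>i. \<bar>g i\<bar> powr p)"
  shows "summable (\<lambda>i. \<bar>f i - g i\<bar> powr p)"
proof (rule summable_comparison_test'[of "\<lambda>i. 2 powr p * (\<bar>f i\<bar> powr p + \<bar>g i\<bar> powr p)" 0])
  show "summable (\<lambda>i. 2 powr p * (\<bar>f i\<bar> powr p + \<bar>g i\<bar> powr p))"
    using assms by (intro summable_mult summable_add)
  show "norm (\<bar>f n - g n\<bar> powr p) \<le> 2 powr p * (\<bar>f n\<bar> powr p + \<bar>g n\<bar> powr p)" for n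
    using abs_add_powr_le[OF assms(1), of "f n" "- g n"] by simp
qed

definition truncation :: "nat \<Rightarrow> (nat \<Rightarrow> real) \<Rightarrow> nat \<Rightarrow> real" where
  "truncation n a j = (if j < n then a j else 0)"

lemma lincomb_canon_basis: "lincomb a canon_basis n = truncation n a"
  by (auto simp: lincomb_def canon_basis_def truncation_def if_distrib cong: if_cong)

lemma suminf_powr_tail_tendsto_0:
  fixes a :: "nat \<Rightarrow> real"
  assumes sa: "summable (\<lambda>i. \<bar>a i\<bar> powr p)"
  shows "summable (\<lambda>i. \<bar>a i - truncation n a i\<bar> powr p)"
    and "(\<lambda>n. \<Sum>i. \<bar>a i - truncation n a i\<bar> powr p) \<longlonglongrightarrow> 0"
proof -
  have tail: "(\<lambda>i. \<bar>a i - truncation n a i\<bar> powr p) = (\<lambda>i. if i < n then 0 else \<bar>a i\<bar> powr p)" for n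
    by (auto simp: truncation_def)
  show s: "summable (\<lambda>i. \<bar>a i - truncation n a i\<bar> powr p)" for n
    unfolding tail by (rule summable_comparison_test'[OF sa, of 0]) auto
  have "(\<Sum>i. \<bar>a i - truncation n a i\<bar> powr p) = (\<Sum>i. \<bar>a i\<bar> powr p) - (\<Sum>i<n. \<bar>a i\<bar> powr p)" for n
  proof -
    have "(\<Sum>i. \<bar>a i - truncation n a i\<bar> powr p)
        = (\<Sum>i. \<bar>a (i + n) - truncation n a (i + n)\<bar> powr p) + (\<Sum>i<n. \<bar>a i - truncation n a i\<bar> powr p)"
      by (rule suminf_split_initial_segment[OF s])
    then show ?thesis using suminf_minus_initial_segment[OF sa] by (simp add: truncation_def)
  qed
  moreover have "(\<lambda>n. (\<Sum>i. \<bar>a i\<bar> powr p) - (\<Sum>i<n. \<bar>a i\<bar> powr p)) \<longlonglongrightarrow> (\<Sum>i. \<bar>a i\<bar> powr p) - (\<Sum>i. \<bar>a i\<bar> powr p)"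
    by (intro tendsto_diff tendsto_const summable_LIMSEQ[OF sa])
  ultimately show "(\<lambda>n. \<Sum>i. \<bar>a i - truncation n a i\<bar> powr p) \<longlonglongrightarrow> 0" by simp
qed

locale block_decomposition =
  fixes len :: "nat \<Rightarrow> nat"
  assumes len_pos: "0 < len k"
begin

definition start :: "nat \<Rightarrow> nat" where
  "start k = (\<Sum>i<k. len i)"

definition block :: "nat \<Rightarrow> nat" where
  "block n = (LEAST k. n < start (Suc k))"

definition offset :: "nat \<Rightarrow> nat" where
  "offset n = n - start (block n)"

lemma start_Suc: "start (Suc k) = start k + len k"
  by (simp add: start_def)

lemma start_mono: "a \<le> b \<Longrightarrow> start a \<le> start b"
  unfolding start_def by (intro sum_mono2) auto

lemma start_ge: "k \<le> start k"
proof -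
  have "(\<Sum>i<k. 1) \<le> start k" unfolding start_def using len_pos by (intro sum_mono) (simp add: Suc_le_eq)
  then show ?thesis by simp
qed

lemma block_bounds: "start (block n) \<le> n" "n < start (Suc (block n))"
proof -
  show "n < start (Suc (block n))"
    unfolding block_def by (rule LeastI[of _ n]) (use start_ge[of "Suc n"] in simp)
  show "start (block n) \<le> n"
  proof (cases "block n")
    case (Suc k)
    then have "\<not> n < start (Suc k)" unfolding block_def by (intro not_less_Least) simp
    then show ?thesis using Suc by simp
  qed (simp add: start_def)
qed

lemma block_eqI:
  assumes "start k \<le> n" "n < start (Suc k)"
  shows "block n = k"
proof (rule ccontr)
  assume "block n \<noteq> k"
  then consider "Suc (block n) \<le> k" | "Suc k \<le> block n" by linarith
  then show False
    using start_mono block_bounds[of n] assms by cases (fastforce+)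
qed

lemma block_start_add: "r < len k \<Longrightarrow> block (start k + r) = k"
  by (rule block_eqI) (auto simp: start_Suc)

lemma offset_start_add: "r < len k \<Longrightarrow> offset (start k + r) = r"
  by (simp add: offset_def block_start_add)

lemma block_ge: "start K \<le> i \<Longrightarrow> K \<le> block i"
  using start_mono[of "Suc (block i)" K] block_bounds(2)[of i] by linarith

lemma sum_blocks: "(\<Sum>i<start K. f i) = (\<Sum>k<K. \<Sum>r<len k. f (start k + r))"
  by (induction K) (simp_all add: start_Suc sum_lessThan_add, simp add: start_def)

lemma summable_bound_by_blocks:
  fixes f g :: "nat \<Rightarrow> real"
  assumes f0: "\<And>i. f i \<ge> 0" and g0: "\<And>i. g i \<ge> 0" and sg: "summable g" and c0: "c \<ge> 0"
    and le: "\<And>K. (\<Sum>i<start K. f i) \<le> c * (\<Sum>i<start K. g i)"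
  shows "summable f" "suminf f \<le> c * suminf g"
proof -
  have b: "(\<Sum>i<n. f i) \<le> c * suminf g" for n
  proof -
    have "(\<Sum>i<n. f i) \<le> (\<Sum>i<start n. f i)"
      using start_ge[of n] f0 by (intro sum_mono2) auto
    also have "\<dots> \<le> c * (\<Sum>i<start n. g i)" by (rule le)
    also have "\<dots> \<le> c * suminf g"
      using sg g0 c0 by (intro mult_left_mono sum_le_suminf) auto
    finally show ?thesis .
  qed
  show sf: "summable f" by (rule summableI_nonneg_bounded[OF f0 b])
  show "suminf f \<le> c * suminf g" by (rule suminf_le_const[OF sf b])
qed

lemma lp_norm_block:
  assumes "\<And>i. \<not> (start k \<le> i \<and> i < start (Suc k)) \<Longrightarrow> f i = 0"
  shows "lp_norm p f = (\<Sum>r<len k. \<bar>f (start k + r)\<bar> powr p) powr (1/p)"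
proof -
  have "lp_norm p f = (\<Sum>i<start k + len k. \<bar>f i\<bar> powr p) powr (1/p)"
    using lp_norm_finite_support[of "start (Suc k)" f p] assms by (simp add: start_Suc)
  also have "(\<Sum>i<start k + len k. \<bar>f i\<bar> powr p) = (\<Sum>r<len k. \<bar>f (start k + r)\<bar> powr p)"
    using assms by (simp add: sum_lessThan_add)
  finally show ?thesis .
qed

lemma lp_norm_ge_block:
  assumes "p > 0" "\<And>i. start (Suc k) \<le> i \<Longrightarrow> f i = 0"
  shows "(\<Sum>r<len k. \<bar>f (start k + r)\<bar> powr p) powr (1/p) \<le> lp_norm p f"
proof -
  have "lp_norm p f = (\<Sum>i<start k + len k. \<bar>f i\<bar> powr p) powr (1/p)"
    using lp_norm_finite_support[of "start (Suc k)" f p] assms by (simp add: start_Suc)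
  also have "(\<Sum>i<start k + len k. \<bar>f i\<bar> powr p) = (\<Sum>i<start k. \<bar>f i\<bar> powr p) + (\<Sum>r<len k. \<bar>f (start k + r)\<bar> powr p)"
    by (rule sum_lessThan_add)
  finally show ?thesis using assms(1)
    by (simp, intro powr_mono2) (auto intro!: sum_nonneg)
qed

end

section \<open>Block-diagonal nilpotent perturbations of the identity\<close>

locale block_perturbation = block_decomposition len
  for len :: "nat \<Rightarrow> nat" +
  fixes p :: real and G :: "nat \<Rightarrow> nat \<Rightarrow> nat \<Rightarrow> real"
  assumes p_gt_1: "1 < p"
    and G_nilpotent: "G k i j \<noteq> 0 \<Longrightarrow> G k j l = 0"
    and G_contraction: "(\<Sum>i<len k. \<bar>\<Sum>j<len k. G k i j * \<beta> j\<bar> powr p) \<le> (\<Sum>i<len k. \<bar>\<beta> i\<bar> powr p)"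
begin

lemma p_pos: "0 < p"
  using p_gt_1 by simp

definition G_entry :: "nat \<Rightarrow> nat \<Rightarrow> real" where
  "G_entry i j = (if block i = block j then G (block i) (offset i) (offset j) else 0)"

definition G_apply :: "(nat \<Rightarrow> real) \<Rightarrow> nat \<Rightarrow> real" where
  "G_apply b i = (\<Sum>j<start (Suc (block i)). G_entry i j * b j)"

definition T_apply :: "(nat \<Rightarrow> real) \<Rightarrow> nat \<Rightarrow> real" where
  "T_apply b i = b i + G_apply b i"

definition u :: "nat \<Rightarrow> nat \<Rightarrow> real" where
  "u n i = canon_basis n i + G_entry i n"

lemma G_entry_nonzeroD:
  assumes "G_entry i j \<noteq> 0"
  shows "block j = block i" "start (block i) \<le> j" "j < start (Suc (block i))"
  using assms block_bounds[of j] by (auto simp: G_entry_def split: if_splits)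

lemma G_apply_block:
  assumes "r < len k"
  shows "G_apply b (start k + r) = (\<Sum>r'<len k. G k r r' * b (start k + r'))"
proof -
  have bk: "block (start k + r) = k" using assms by (rule block_start_add)
  have "G_apply b (start k + r) = (\<Sum>j<start k. G_entry (start k + r) j * b j)
      + (\<Sum>r'<len k. G_entry (start k + r) (start k + r') * b (start k + r'))"
    by (simp add: G_apply_def bk start_Suc sum_lessThan_add)
  also have "(\<Sum>j<start k. G_entry (start k + r) j * b j) = 0"
    using G_entry_nonzeroD(2)[of "start k + r"] bk by (intro sum.neutral) force
  also have "(\<Sum>r'<len k. G_entry (start k + r) (start k + r') * b (start k + r'))
      = (\<Sum>r'<len k. G k r r' * b (start k + r'))"
    using assms by (intro sum.cong) (auto simp: G_entry_def block_start_add offset_start_add)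
  finally show ?thesis by simp
qed

lemma sum_G_apply_le: "(\<Sum>i<start K. \<bar>G_apply b i\<bar> powr p) \<le> (\<Sum>i<start K. \<bar>b i\<bar> powr p)"
proof -
  have "(\<Sum>r<len k. \<bar>G_apply b (start k + r)\<bar> powr p) \<le> (\<Sum>r<len k. \<bar>b (start k + r)\<bar> powr p)" for k
    using G_contraction[of k "\<lambda>r. b (start k + r)"] by (simp add: G_apply_block)
  then show ?thesis unfolding sum_blocks by (rule sum_mono)
qed

lemma G_apply_G_apply: "G_apply (G_apply b) = (\<lambda>i. 0)"
proof
  fix i
  have zero: "G_entry i j * G_apply b j = 0" for j
  proof (cases "G_entry i j = 0")
    case False
    then have "G (block i) (offset i) (offset j) \<noteq> 0" "block j = block i"
      by (auto simp: G_entry_def split: if_splits)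
    then have "G_entry j l = 0" for l by (auto simp: G_entry_def dest: G_nilpotent)
    then show ?thesis by (simp add: G_apply_def)
  qed simp
  show "G_apply (G_apply b) i = 0" unfolding G_apply_def[of "G_apply b"] by (intro sum.neutral ballI zero)
qed

lemma G_apply_diff: "G_apply (\<lambda>i. b i - c i) = (\<lambda>i. G_apply b i - G_apply c i)"
  by (auto simp: G_apply_def sum_subtractf algebra_simps)

lemma T_apply_diff: "T_apply (\<lambda>i. b i - c i) = (\<lambda>i. T_apply b i - T_apply c i)"
  by (intro ext) (simp add: T_apply_def G_apply_diff)

lemma T_apply_divide: "T_apply (\<lambda>i. b i / c) = (\<lambda>i. T_apply b i / c)"
  by (intro ext) (simp add: T_apply_def G_apply_def sum_divide_distrib add_divide_distrib)

lemma T_apply_diff_G_apply: "T_apply (\<lambda>i. b i - G_apply b i) = b"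
  by (intro ext) (simp add: T_apply_def G_apply_diff G_apply_G_apply)

lemma G_apply_add: "G_apply (\<lambda>i. b i + c i) = (\<lambda>i. G_apply b i + G_apply c i)"
  by (auto simp: G_apply_def sum.distrib algebra_simps)

lemma G_apply_T_apply: "G_apply (T_apply b) = G_apply b"
  using G_apply_add[of b "G_apply b"] by (simp add: T_apply_def[abs_def] G_apply_G_apply)

lemma diff_G_apply_T_apply: "(\<lambda>i. T_apply b i - G_apply (T_apply b) i) = b"
  by (simp add: G_apply_T_apply T_apply_def)

lemma sum_T_apply_le: "(\<Sum>i<start K. \<bar>T_apply b i\<bar> powr p) \<le> 2 * 2 powr p * (\<Sum>i<start K. \<bar>b i\<bar> powr p)"
proof -
  have "(\<Sum>i<start K. \<bar>T_apply b i\<bar> powr p)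
      \<le> 2 powr p * ((\<Sum>i<start K. \<bar>b i\<bar> powr p) + (\<Sum>i<start K. \<bar>G_apply b i\<bar> powr p))"
    unfolding T_apply_def sum_distrib_left sum.distrib[symmetric]
    by (intro sum_mono abs_add_powr_le p_pos)
  also have "\<dots> \<le> 2 * 2 powr p * (\<Sum>i<start K. \<bar>b i\<bar> powr p)"
    using sum_G_apply_le[where K=K and b=b] by simp
  finally show ?thesis .
qed

lemma sum_le_T_apply: "(\<Sum>i<start K. \<bar>b i\<bar> powr p) \<le> 2 * 2 powr p * (\<Sum>i<start K. \<bar>T_apply b i\<bar> powr p)"
proof -
  have "\<bar>b i\<bar> powr p \<le> 2 powr p * (\<bar>T_apply b i\<bar> powr p + \<bar>G_apply (T_apply b) i\<bar> powr p)" for i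
    using abs_add_powr_le[OF p_pos, of "T_apply b i" "- G_apply (T_apply b) i"]
      fun_cong[OF diff_G_apply_T_apply[of b], of i] by simp
  then have "(\<Sum>i<start K. \<bar>b i\<bar> powr p)
      \<le> 2 powr p * ((\<Sum>i<start K. \<bar>T_apply b i\<bar> powr p) + (\<Sum>i<start K. \<bar>G_apply (T_apply b) i\<bar> powr p))"
    unfolding sum_distrib_left sum.distrib[symmetric] by (intro sum_mono)
  also have "\<dots> \<le> 2 * 2 powr p * (\<Sum>i<start K. \<bar>T_apply b i\<bar> powr p)"
    using sum_G_apply_le[where K=K and b="T_apply b"] by simp
  finally show ?thesis .
qed

lemma T_apply_vanish:
  assumes "\<And>j. start K \<le> j \<Longrightarrow> b j = 0" "start K \<le> i"
  shows "T_apply b i = 0"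
proof -
  have "start K \<le> start (block i)" using block_ge[OF assms(2)] by (rule start_mono)
  then have zero: "G_entry i j * b j = 0" for j
    using G_entry_nonzeroD(2)[of i j] assms(1) by fastforce
  have "G_apply b i = 0" unfolding G_apply_def by (intro sum.neutral ballI zero)
  then show ?thesis using assms by (simp add: T_apply_def)
qed

lemma lincomb_u: "lincomb a u n = T_apply (truncation n a)"
proof
  fix i
  define E where "E = start (Suc (block i))"
  have "lincomb a u n i = (\<Sum>j<n. a j * (if i = j then 1 else 0)) + (\<Sum>j<n. a j * G_entry i j)"
    by (simp add: lincomb_def u_def canon_basis_def distrib_left sum.distrib)
  also have "(\<Sum>j<n. a j * (if i = j then 1 else 0)) = truncation n a i"
    by (simp add: truncation_def if_distrib cong: if_cong)
  also have "(\<Sum>j<n. a j * G_entry i j) = (\<Sum>j<n. G_entry i j * truncation n a j)"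
    by (intro sum.cong) (auto simp: truncation_def)
  also have "(\<Sum>j<n. G_entry i j * truncation n a j) = (\<Sum>j<max n E. G_entry i j * truncation n a j)"
    by (rule sym, rule sum_lessThan_vanishing_tail) (auto simp: truncation_def)
  also have "\<dots> = (\<Sum>j<E. G_entry i j * truncation n a j)"
  proof (rule sum_lessThan_vanishing_tail)
    fix j assume "E \<le> j"
    then have "G_entry i j = 0" using G_entry_nonzeroD(3)[of i j] by (auto simp: E_def)
    then show "G_entry i j * truncation n a j = 0" by simp
  qed simp
  finally show "lincomb a u n i = T_apply (truncation n a) i" by (simp add: T_apply_def G_apply_def E_def)
qed

lemma equivalent_u_canon_basis: "equivalent_seq p u canon_basis"
  unfolding equivalent_seq_def
proof (intro exI[of _ "(2 * 2 powr p) powr (1/p)"] conjI allI)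
  fix a m
  define K where "K = Suc m"
  define b where "b = truncation m a"
  have bv: "b j = 0" if "start K \<le> j" for j
    using start_ge[of K] that by (simp add: b_def K_def truncation_def)
  have nb: "lp_norm p b = (\<Sum>i<start K. \<bar>b i\<bar> powr p) powr (1/p)"
    by (rule lp_norm_finite_support) (rule bv)
  have nt: "lp_norm p (T_apply b) = (\<Sum>i<start K. \<bar>T_apply b i\<bar> powr p) powr (1/p)"
    by (rule lp_norm_finite_support) (rule T_apply_vanish[OF bv])
  have s0: "(\<Sum>i<start K. \<bar>b i\<bar> powr p) \<ge> 0" "(\<Sum>i<start K. \<bar>T_apply b i\<bar> powr p) \<ge> 0"
    by (auto intro!: sum_nonneg)
  have "lp_norm p (T_apply b) \<le> (2 * 2 powr p * (\<Sum>i<start K. \<bar>b i\<bar> powr p)) powr (1/p)"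
    unfolding nt using sum_T_apply_le p_pos s0 by (intro powr_mono2) auto
  also have "\<dots> = (2 * 2 powr p) powr (1/p) * lp_norm p b" unfolding nb using s0 by (simp add: powr_mult)
  finally show "lp_norm p (lincomb a u m) \<le> (2 * 2 powr p) powr (1/p) * lp_norm p (lincomb a canon_basis m)"
    by (simp add: lincomb_u lincomb_canon_basis b_def)
  have "lp_norm p b \<le> (2 * 2 powr p * (\<Sum>i<start K. \<bar>T_apply b i\<bar> powr p)) powr (1/p)"
    unfolding nb using sum_le_T_apply p_pos s0 by (intro powr_mono2) auto
  also have "\<dots> = (2 * 2 powr p) powr (1/p) * lp_norm p (T_apply b)" unfolding nt using s0 by (simp add: powr_mult)
  finally show "lp_norm p (lincomb a canon_basis m) \<le> (2 * 2 powr p) powr (1/p) * lp_norm p (lincomb a u m)"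
    by (simp add: lincomb_u lincomb_canon_basis b_def)
qed simp

lemma u_in_lp: "u k \<in> lp p"
proof (rule lp_finite_support)
  fix i assume "start (Suc (block k)) \<le> i"
  moreover have "G_entry i k = 0"
    using block_bounds(2)[of i] G_entry_nonzeroD(1)[of i k] calculation by fastforce
  ultimately show "u k i = 0"
    using block_bounds(2)[of k] by (auto simp: u_def canon_basis_def)
qed

lemma summable_T_apply:
  assumes "summable (\<lambda>i. \<bar>b i\<bar> powr p)"
  shows "summable (\<lambda>i. \<bar>G_apply b i\<bar> powr p)" "summable (\<lambda>i. \<bar>T_apply b i\<bar> powr p)"
    and "(\<Sum>i. \<bar>T_apply b i\<bar> powr p) \<le> 2 * 2 powr p * (\<Sum>i. \<bar>b i\<bar> powr p)"
proof -
  show "summable (\<lambda>i. \<bar>G_apply b i\<bar> powr p)"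
    using summable_bound_by_blocks(1)[of "\<lambda>i. \<bar>G_apply b i\<bar> powr p" "\<lambda>i. \<bar>b i\<bar> powr p" 1]
      assms sum_G_apply_le by simp
  show "summable (\<lambda>i. \<bar>T_apply b i\<bar> powr p)"
    and "(\<Sum>i. \<bar>T_apply b i\<bar> powr p) \<le> 2 * 2 powr p * (\<Sum>i. \<bar>b i\<bar> powr p)"
    using summable_bound_by_blocks[of "\<lambda>i. \<bar>T_apply b i\<bar> powr p" "\<lambda>i. \<bar>b i\<bar> powr p" "2 * 2 powr p"]
      assms sum_T_apply_le by simp_all
qed

lemma has_expansion_u:
  assumes x: "x \<in> lp p"
  shows "has_expansion p u x (\<lambda>i. x i - G_apply x i)"
proof -
  define a where "a i = x i - G_apply x i" for i
  have sx: "summable (\<lambda>i. \<bar>x i\<bar> powr p)" using x by (simp add: lp_def)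
  have sa: "summable (\<lambda>i. \<bar>a i\<bar> powr p)"
    unfolding a_def by (rule summable_powr_diff[OF p_pos sx summable_T_apply(1)[OF sx]])
  define tl where "tl n = (\<Sum>i. \<bar>a i - truncation n a i\<bar> powr p)" for n
  have remainder: "(\<lambda>i. x i - lincomb a u n i) = T_apply (\<lambda>i. a i - truncation n a i)" for n
    using T_apply_diff_G_apply[of x] by (simp add: a_def[abs_def] lincomb_u T_apply_diff)
  have bound: "lp_norm p (T_apply (\<lambda>i. a i - truncation n a i)) \<le> (2 * 2 powr p * tl n) powr (1/p)" for n
    unfolding lp_norm_def tl_def using suminf_powr_tail_tendsto_0(1)[OF sa, of n] p_pos
    by (intro powr_mono2 suminf_nonneg summable_T_apply) auto
  have lim: "(\<lambda>n. (2 * 2 powr p * tl n) powr (1/p)) \<longlonglongrightarrow> 0"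
  proof (rule tendsto_zero_powrI[where b="1/p"])
    show "(\<lambda>n. 2 * 2 powr p * tl n) \<longlonglongrightarrow> 0"
      using tendsto_mult_right_zero[OF suminf_powr_tail_tendsto_0(2)[OF sa]] by (simp add: tl_def)
    show "\<forall>\<^sub>F n in sequentially. 0 \<le> 2 * 2 powr p * tl n"
      using suminf_powr_tail_tendsto_0(1)[OF sa] by (simp add: tl_def suminf_nonneg)
  qed (simp_all add: p_pos)
  have "(\<lambda>n. lp_norm p (T_apply (\<lambda>i. a i - truncation n a i))) \<longlonglongrightarrow> 0"
    by (rule real_tendsto_sandwich[OF _ _ tendsto_const lim]) (use bound in \<open>auto simp: lp_norm_def\<close>)
  then show ?thesis unfolding has_expansion_def a_def[symmetric] remainder .
qed

lemma has_expansion_u_unique: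
  assumes x: "x \<in> lp p" and h: "has_expansion p u x a"
  shows "a = (\<lambda>i. x i - G_apply x i)"
proof -
  have sx: "summable (\<lambda>i. \<bar>x i\<bar> powr p)" using x by (simp add: lp_def)
  have "x i = T_apply a i" for i
  proof -
    define E where "E = start (Suc (block i))"
    have stable: "lincomb a u n i = T_apply a i" if "E \<le> n" for n
    proof -
      have "i < E" using block_bounds(2)[of i] by (simp add: E_def)
      then show ?thesis
        using that by (auto simp: lincomb_u T_apply_def G_apply_def truncation_def E_def[symmetric] intro!: sum.cong)
    qed
    define d where "d n = (\<lambda>j. x j - lincomb a u n j)" for n
    have sd: "summable (\<lambda>j. \<bar>d n j\<bar> powr p)" for n
    proof -
      have "lincomb a u n \<in> lp p"
        unfolding lincomb_u
        by (rule lp_finite_support[of "start (Suc n)"], rule T_apply_vanish[of "Suc n"])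
           (use start_ge[of "Suc n"] in \<open>auto simp: truncation_def\<close>)
      then show ?thesis unfolding d_def lp_def by (intro summable_powr_diff[OF p_pos sx]) simp
    qed
    have "\<bar>x i - T_apply a i\<bar> \<le> 0"
    proof (rule LIMSEQ_le_const)
      show "(\<lambda>n. lp_norm p (d n)) \<longlonglongrightarrow> 0" using h by (simp add: has_expansion_def d_def)
      show "\<exists>N. \<forall>n\<ge>N. \<bar>x i - T_apply a i\<bar> \<le> lp_norm p (d n)"
      proof (intro exI[of _ E] allI impI)
        fix n assume "E \<le> n"
        then show "\<bar>x i - T_apply a i\<bar> \<le> lp_norm p (d n)"
          using abs_le_lp_norm[OF p_pos sd[of n], of i] stable[of n] by (simp add: d_def)
      qed
    qed
    then show ?thesis by simp
  qed
  then have "x = T_apply a" by auto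
  then show ?thesis using diff_G_apply_T_apply[of a] by simp
qed

lemma schauder_basis_u: "schauder_basis p u"
  unfolding schauder_basis_def
  using u_in_lp has_expansion_u has_expansion_u_unique by blast

lemma coef_u:
  assumes "x \<in> lp p"
  shows "coef p u x = (\<lambda>i. x i - G_apply x i)"
  unfolding coef_def using assms has_expansion_u has_expansion_u_unique by blast

end

section \<open>Partial sums and greedy sums of flat vectors\<close>

lemma filter_rank_less_card:
  fixes S :: "nat set"
  assumes "finite S"
  shows "{j \<in> S. card (S \<inter> {..<j}) < card (S \<inter> {..<t})} = S \<inter> {..<t}"
proof (intro set_eqI iffI)
  fix j assume j: "j \<in> {j \<in> S. card (S \<inter> {..<j}) < card (S \<inter> {..<t})}"
  show "j \<in> S \<inter> {..<t}"
  proof (rule ccontr)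
    assume "j \<notin> S \<inter> {..<t}"
    then have "card (S \<inter> {..<t}) \<le> card (S \<inter> {..<j})"
      using j assms by (intro card_mono) auto
    then show False using j by simp
  qed
next
  fix j assume j: "j \<in> S \<inter> {..<t}"
  then have "card (S \<inter> {..<j}) < card (S \<inter> {..<t})"
    using assms by (intro psubset_card_mono) auto
  then show "j \<in> {j \<in> S. card (S \<inter> {..<j}) < card (S \<inter> {..<t})}" using j by auto
qed

lemma greedy_set_flat:
  fixes S :: "nat set"
  assumes "finite S" "v > 0" "n \<le> card S"
  shows "greedy_set (\<lambda>j. if j \<in> S then v else 0) n = {j \<in> S. card (S \<inter> {..<j}) < n}"
proof -
  let ?c = "\<lambda>j. if j \<in> S then v else 0"
  have before_in: "{i. greedy_prec ?c i j} = S \<inter> {..<j}" if "j \<in> S" for j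
    using that assms(2) by (auto simp: greedy_prec_def split: if_splits)
  have before_out: "S \<subseteq> {i. greedy_prec ?c i j}" if "j \<notin> S" for j
    using that assms(2) by (auto simp: greedy_prec_def)
  show ?thesis
  proof (intro set_eqI iffI)
    fix j assume j: "j \<in> greedy_set ?c n"
    then have fin: "finite {i. greedy_prec ?c i j}" and less: "card {i. greedy_prec ?c i j} < n"
      by (auto simp: greedy_set_def)
    have "j \<in> S"
    proof (rule ccontr)
      assume "j \<notin> S"
      then have "card S \<le> card {i. greedy_prec ?c i j}" using before_out fin by (intro card_mono)
      then show False using less assms(3) by simp
    qed
    then show "j \<in> {j \<in> S. card (S \<inter> {..<j}) < n}"
      using before_in less by simp
  next
    fix j assume "j \<in> {j \<in> S. card (S \<inter> {..<j}) < n}"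
    then show "j \<in> greedy_set ?c n" using before_in by (simp add: greedy_set_def)
  qed
qed

lemma greedy_set_flat_initial:
  fixes S :: "nat set"
  assumes "finite S" "v > 0"
  shows "greedy_set (\<lambda>j. if j \<in> S then v else 0) (card (S \<inter> {..<t})) = S \<inter> {..<t}"
  using greedy_set_flat[OF assms, of "card (S \<inter> {..<t})"] filter_rank_less_card[OF assms(1)] assms(1)
  by (simp add: card_mono)

lemma mult_root_less_root:
  fixes B S R p :: real
  assumes "p > 0" "B \<ge> 0" "S > 0" "(B powr p + 1) * S \<le> R"
  shows "B * S powr (1/p) < R powr (1/p)"
proof -
  have "(B powr p * S) powr (1/p) < R powr (1/p)"
    using assms by (intro powr_less_mono2) (auto simp: algebra_simps)
  then show ?thesis using assms by (simp add: powr_mult powr_powr)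
qed

definition block_apply :: "(nat \<Rightarrow> nat \<Rightarrow> real) \<Rightarrow> nat \<Rightarrow> (nat \<Rightarrow> real) \<Rightarrow> nat \<Rightarrow> real" where
  "block_apply A n \<beta> r = \<beta> r + (\<Sum>r'<n. A r r' * \<beta> r')"

(* For flat coefficient vectors greedy sums are partial sums, so this one property of the blocks
   rules out both bibasis and uniform quasi-greediness. *)
definition flat_partial_sums_unbounded :: "real \<Rightarrow> (nat \<Rightarrow> nat) \<Rightarrow> (nat \<Rightarrow> nat \<Rightarrow> nat \<Rightarrow> real) \<Rightarrow> bool" where
  "flat_partial_sums_unbounded p len G \<longleftrightarrow>
     (\<forall>F. \<exists>k S \<theta>. S \<subseteq> {..<len k} \<and> (\<forall>r<len k. \<theta> r \<le> len k) \<and>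
        0 < (\<Sum>r<len k. \<bar>block_apply (G k) (len k) (indicator S) r\<bar> powr p) \<and>
        F * (\<Sum>r<len k. \<bar>block_apply (G k) (len k) (indicator S) r\<bar> powr p)
          \<le> (\<Sum>r<len k. \<bar>block_apply (G k) (len k) (truncation (\<theta> r) (indicator S)) r\<bar> powr p))"

context block_decomposition
begin

definition embed :: "nat \<Rightarrow> (nat \<Rightarrow> real) \<Rightarrow> nat \<Rightarrow> real" where
  "embed k \<beta> j = (if start k \<le> j \<and> j < start (Suc k) then \<beta> (j - start k) else 0)"

lemma truncation_embed:
  "t \<le> start (Suc k) \<Longrightarrow> truncation t (embed k \<beta>) = embed k (truncation (t - start k) \<beta>)"
  by (intro ext) (auto simp: truncation_def embed_def)

lemma embed_indicator:
  assumes "S \<subseteq> {..<len k}"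
  shows "embed k (indicator S) = indicator ((+) (start k) ` S)"
proof
  fix j
  show "embed k (indicator S) j = indicator ((+) (start k) ` S) j"
  proof (cases "start k \<le> j \<and> j < start (Suc k)")
    case True
    then have "j \<in> (+) (start k) ` S \<longleftrightarrow> j - start k \<in> S" by force
    then show ?thesis using True by (simp add: embed_def indicator_def)
  next
    case False
    then have "j \<notin> (+) (start k) ` S" using assms by (auto simp: start_Suc)
    then show ?thesis using False by (auto simp: embed_def)
  qed
qed

lemma lp_norm_Max_abs_ge:
  fixes h :: "nat \<Rightarrow> nat \<Rightarrow> real" and g :: "nat \<Rightarrow> real"
  assumes "p > 0" "finite N" "N \<noteq> {}"
    and vanish: "\<And>n i. n \<in> N \<Longrightarrow> start (Suc k) \<le> i \<Longrightarrow> h n i = 0"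
    and dominated: "\<And>r. r < len k \<Longrightarrow> \<exists>n\<in>N. \<bar>g r\<bar> \<le> \<bar>h n (start k + r)\<bar>"
  shows "(\<Sum>r<len k. \<bar>g r\<bar> powr p) powr (1/p) \<le> lp_norm p (\<lambda>i. Max ((\<lambda>n. \<bar>h n i\<bar>) ` N))"
proof -
  define H where "H i = Max ((\<lambda>n. \<bar>h n i\<bar>) ` N)" for i
  have "H i = 0" if "start (Suc k) \<le> i" for i
  proof -
    have "(\<lambda>n. \<bar>h n i\<bar>) ` N = {0}" using vanish that assms(3) by auto
    then show ?thesis by (simp add: H_def)
  qed
  then have "(\<Sum>r<len k. \<bar>H (start k + r)\<bar> powr p) powr (1/p) \<le> lp_norm p H"
    by (intro lp_norm_ge_block assms(1))
  moreover have "\<bar>g r\<bar> \<le> H (start k + r)" if "r < len k" for r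
    using dominated[OF that] assms(2) unfolding H_def by (auto intro: order_trans[OF _ Max_ge])
  then have "(\<Sum>r<len k. \<bar>g r\<bar> powr p) \<le> (\<Sum>r<len k. \<bar>H (start k + r)\<bar> powr p)"
    using assms(1) by (intro sum_mono powr_mono2) (auto intro: order_trans[OF _ abs_ge_self])
  then have "(\<Sum>r<len k. \<bar>g r\<bar> powr p) powr (1/p) \<le> (\<Sum>r<len k. \<bar>H (start k + r)\<bar> powr p) powr (1/p)"
    using assms(1) by (intro powr_mono2) (auto intro!: sum_nonneg)
  ultimately show ?thesis by (simp add: H_def[abs_def])
qed

end

context block_perturbation
begin

lemma u_other_block: "block i \<noteq> block j \<Longrightarrow> u j i = 0"
  by (auto simp: u_def canon_basis_def G_entry_def)

lemma T_apply_embed: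
  "r < len k \<Longrightarrow> T_apply (embed k \<beta>) (start k + r) = block_apply (G k) (len k) \<beta> r"
  by (simp add: T_apply_def G_apply_block block_apply_def embed_def start_Suc)

lemma T_apply_embed_outside:
  assumes "\<not> (start k \<le> i \<and> i < start (Suc k))"
  shows "T_apply (embed k \<beta>) i = 0"
proof -
  have "G_entry i j * embed k \<beta> j = 0" for j
  proof (cases "G_entry i j = 0 \<or> embed k \<beta> j = 0")
    case False
    then have "block i = block j" "block j = k"
      using G_entry_nonzeroD(1)[of i j] block_eqI[of k j] by (auto simp: embed_def split: if_splits)
    then show ?thesis using assms block_bounds[of i] by simp
  qed auto
  then have "G_apply (embed k \<beta>) i = 0" unfolding G_apply_def by (intro sum.neutral) simp
  then show ?thesis using assms by (auto simp: T_apply_def embed_def)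
qed

lemma lp_norm_T_apply_embed:
  "lp_norm p (T_apply (embed k \<beta>)) = (\<Sum>r<len k. \<bar>block_apply (G k) (len k) \<beta> r\<bar> powr p) powr (1/p)"
  by (subst lp_norm_block[of k]) (simp_all add: T_apply_embed_outside T_apply_embed)

lemma lincomb_u_embed:
  assumes "t \<le> len k" "r < len k"
  shows "lincomb (embed k \<beta>) u (start k + t) (start k + r) = block_apply (G k) (len k) (truncation t \<beta>) r"
  using assms by (simp add: lincomb_u truncation_embed start_Suc T_apply_embed)

lemma lincomb_u_embed_outside:
  assumes "t \<le> start (Suc k)" "\<not> (start k \<le> i \<and> i < start (Suc k))"
  shows "lincomb (embed k \<beta>) u t i = 0"
  using assms by (simp add: lincomb_u truncation_embed T_apply_embed_outside)

lemma flat_greedy_sums: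
  assumes A: "finite A" and c: "c > 0"
  defines "x \<equiv> (\<lambda>i. T_apply (indicator A) i / c)"
  shows "x \<in> lp p" "coef p u x = (\<lambda>j. if j \<in> A then 1 / c else 0)"
    and "greedy_sum p u (card (A \<inter> {..<t})) x = (\<lambda>i. lincomb (indicator A) u t i / c)"
    and "n \<le> card A \<Longrightarrow> greedy_set (coef p u x) n \<subseteq> A"
proof -
  define b :: "nat \<Rightarrow> real" where "b j = indicator A j / c" for j
  have xb: "x = T_apply b" unfolding x_def b_def by (simp add: T_apply_divide)
  obtain K where "A \<subseteq> {..<start K}"
    using A finite_nat_bounded start_ge by (meson lessThan_subset_iff order.trans)
  then have "b j = 0" if "start K \<le> j" for j using that by (auto simp: b_def indicator_def)
  then show x: "x \<in> lp p" unfolding xb by (intro lp_finite_support[of "start K"] T_apply_vanish)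
  have "coef p u x = b" using coef_u[OF x] diff_G_apply_T_apply[of b] by (simp add: xb)
  then show coef: "coef p u x = (\<lambda>j. if j \<in> A then 1 / c else 0)"
    by (auto simp: b_def[abs_def] indicator_def)
  show "n \<le> card A \<Longrightarrow> greedy_set (coef p u x) n \<subseteq> A"
    using greedy_set_flat[OF A, of "1 / c" n] c by (auto simp: coef)
  have "greedy_sum p u (card (A \<inter> {..<t})) x i = lincomb (indicator A) u t i / c" for i
  proof -
    have "greedy_sum p u (card (A \<inter> {..<t})) x i = (\<Sum>j\<in>A \<inter> {..<t}. u j i) / c"
      using greedy_set_flat_initial[OF A, of "1 / c" t] c
      by (simp add: greedy_sum_def coef sum_divide_distrib)
    also have "(\<Sum>j\<in>A \<inter> {..<t}. u j i) = lincomb (indicator A) u t i"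
      by (simp add: lincomb_def indicator_def if_distrib sum.inter_restrict Int_commute cong: if_cong)
    finally show ?thesis .
  qed
  then show "greedy_sum p u (card (A \<inter> {..<t})) x = (\<lambda>i. lincomb (indicator A) u t i / c)"
    by auto
qed

lemma not_bibasic_u:
  assumes "flat_partial_sums_unbounded p len G"
  shows "\<not> bibasic p u"
proof
  assume "bibasic p u"
  then obtain M where "M \<ge> 1" and M: "\<And>m a. lp_norm p (\<lambda>i. Max ((\<lambda>n. \<bar>lincomb a u (Suc n) i\<bar>) ` {..m}))
      \<le> M * lp_norm p (lincomb a u (Suc m))"
    unfolding bibasic_def by blast
  obtain k S \<theta> where S: "S \<subseteq> {..<len k}" and \<theta>: "\<forall>r<len k. \<theta> r \<le> len k"
    and pos: "0 < (\<Sum>r<len k. \<bar>block_apply (G k) (len k) (indicator S) r\<bar> powr p)"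
    and big: "(M powr p + 1) * (\<Sum>r<len k. \<bar>block_apply (G k) (len k) (indicator S) r\<bar> powr p)
      \<le> (\<Sum>r<len k. \<bar>block_apply (G k) (len k) (truncation (\<theta> r) (indicator S)) r\<bar> powr p)"
    using assms unfolding flat_partial_sums_unbounded_def by blast
  define a where "a = embed k (indicator S)"
  define m where "m = start k + len k - 1"
  have m: "Suc m = start (Suc k)" using len_pos[of k] by (simp add: m_def start_Suc)
  have "(\<Sum>r<len k. \<bar>block_apply (G k) (len k) (truncation (\<theta> r) (indicator S)) r\<bar> powr p) powr (1/p)
      \<le> lp_norm p (\<lambda>i. Max ((\<lambda>n. \<bar>lincomb a u (Suc n) i\<bar>) ` {..m}))"
  proof (rule lp_norm_Max_abs_ge)
    show "lincomb a u (Suc n) i = 0" if "n \<in> {..m}" "start (Suc k) \<le> i" for n i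
      using that m unfolding a_def by (intro lincomb_u_embed_outside) auto
    fix r assume r: "r < len k"
    show "\<exists>n\<in>{..m}. \<bar>block_apply (G k) (len k) (truncation (\<theta> r) (indicator S)) r\<bar> \<le> \<bar>lincomb a u (Suc n) (start k + r)\<bar>"
    proof (cases "start k + \<theta> r")
      case 0
      then have "truncation (\<theta> r) (indicator S) = (\<lambda>_. 0)" by (auto simp: truncation_def[abs_def])
      then show ?thesis by (auto simp: block_apply_def)
    next
      case (Suc n)
      moreover have "\<theta> r \<le> len k" using \<theta> r by simp
      ultimately have "n \<le> m" using m by (simp add: start_Suc)
      moreover have "lincomb a u (Suc n) (start k + r) = block_apply (G k) (len k) (truncation (\<theta> r) (indicator S)) r"
        using lincomb_u_embed[of "\<theta> r" k r] \<theta> r Suc by (simp add: a_def)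
      ultimately show ?thesis by force
    qed
  qed (use p_pos in auto)
  moreover have "truncation (len k) (indicator S) = indicator S"
    using S by (intro ext) (auto simp: truncation_def indicator_def)
  then have "lp_norm p (lincomb a u (Suc m)) = (\<Sum>r<len k. \<bar>block_apply (G k) (len k) (indicator S) r\<bar> powr p) powr (1/p)"
    using m by (simp add: a_def lincomb_u truncation_embed start_Suc lp_norm_T_apply_embed)
  ultimately show False
    using M[of a m] mult_root_less_root[OF p_pos _ pos big] \<open>M \<ge> 1\<close> by simp
qed

lemma normalized_flat_block_vector:
  assumes S: "S \<subseteq> {..<len k}"
    and pos: "0 < (\<Sum>r<len k. \<bar>block_apply (G k) (len k) (indicator S) r\<bar> powr p)"
  defines "A \<equiv> (+) (start k) ` S"
    and "c \<equiv> (\<Sum>r<len k. \<bar>block_apply (G k) (len k) (indicator S) r\<bar> powr p) powr (1/p)"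
  shows "finite A" "1 \<le> card A" "c > 0" "embed k (indicator S) = indicator A"
    and "lp_norm p (\<lambda>i. T_apply (indicator A) i / c) = 1"
    and "n \<le> card A \<Longrightarrow> start (Suc k) \<le> i \<Longrightarrow> greedy_sum p u n (\<lambda>i. T_apply (indicator A) i / c) i = 0"
proof -
  show A: "finite A" using S by (simp add: A_def finite_subset)
  show embed_A: "embed k (indicator S) = indicator A" unfolding A_def using S by (rule embed_indicator)
  show c: "c > 0" using pos by (simp add: c_def)
  have "S \<noteq> {}" using pos by (auto simp: block_apply_def)
  then show "1 \<le> card A" using A by (simp add: A_def Suc_le_eq card_gt_0_iff)
  have "lp_norm p (\<lambda>i. T_apply (indicator A) i / c)
      = (\<Sum>r<len k. \<bar>T_apply (indicator A) (start k + r) / c\<bar> powr p) powr (1/p)"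
    unfolding embed_A[symmetric] by (intro lp_norm_block) (simp add: T_apply_embed_outside)
  also have "\<dots> = (\<Sum>r<len k. \<bar>T_apply (indicator A) (start k + r)\<bar> powr p) powr (1/p) / c"
    using c p_pos by (simp add: abs_divide powr_divide sum_divide_distrib[symmetric] powr_powr sum_nonneg)
  also have "\<dots> = 1"
    using c unfolding embed_A[symmetric] by (simp add: T_apply_embed c_def)
  finally show "lp_norm p (\<lambda>i. T_apply (indicator A) i / c) = 1" .
  assume "n \<le> card A" "start (Suc k) \<le> i"
  have "u j i = 0" if "j \<in> A" for j
    using that \<open>start (Suc k) \<le> i\<close> S block_bounds(2)[of i]
    by (intro u_other_block) (auto simp: A_def block_start_add)
  then show "greedy_sum p u n (\<lambda>i. T_apply (indicator A) i / c) i = 0"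
    using flat_greedy_sums(4)[OF A c \<open>n \<le> card A\<close>] unfolding greedy_sum_def by (intro sum.neutral) auto
qed

lemma not_uniformly_quasi_greedy_u:
  assumes "flat_partial_sums_unbounded p len G"
  shows "\<not> uniformly_quasi_greedy p u"
proof
  assume "uniformly_quasi_greedy p u"
  then obtain B where B: "\<And>m x. 1 \<le> m \<Longrightarrow> x \<in> lp p \<Longrightarrow> (\<exists>a. has_expansion p u x a) \<Longrightarrow> lp_norm p x = 1 \<Longrightarrow>
      lp_norm p (\<lambda>i. Max ((\<lambda>n. \<bar>greedy_sum p u n x i\<bar>) ` {1..m})) \<le> B"
    unfolding uniformly_quasi_greedy_def by blast
  obtain k S \<theta> where S: "S \<subseteq> {..<len k}" and \<theta>: "\<forall>r<len k. \<theta> r \<le> len k"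
    and pos: "0 < (\<Sum>r<len k. \<bar>block_apply (G k) (len k) (indicator S) r\<bar> powr p)"
    and big: "(max B 0 powr p + 1) * (\<Sum>r<len k. \<bar>block_apply (G k) (len k) (indicator S) r\<bar> powr p)
      \<le> (\<Sum>r<len k. \<bar>block_apply (G k) (len k) (truncation (\<theta> r) (indicator S)) r\<bar> powr p)"
    using assms unfolding flat_partial_sums_unbounded_def by blast
  define A where "A = (+) (start k) ` S"
  define c where "c = (\<Sum>r<len k. \<bar>block_apply (G k) (len k) (indicator S) r\<bar> powr p) powr (1/p)"
  define x where "x = (\<lambda>i. T_apply (indicator A) i / c)"
  note flat = normalized_flat_block_vector[OF S pos, folded A_def c_def x_def]
  note greedy = flat_greedy_sums[OF flat(1,3), folded x_def]
  have norm_x: "lp_norm p x = 1" using flat(5) by (simp add: x_def)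
  have "(\<Sum>r<len k. \<bar>block_apply (G k) (len k) (truncation (\<theta> r) (indicator S)) r / c\<bar> powr p) powr (1/p)
      \<le> lp_norm p (\<lambda>i. Max ((\<lambda>n. \<bar>greedy_sum p u n x i\<bar>) ` {1..card A}))"
  proof (rule lp_norm_Max_abs_ge)
    fix r assume r: "r < len k"
    define t where "t = start k + \<theta> r"
    have "greedy_sum p u (card (A \<inter> {..<t})) x (start k + r)
        = block_apply (G k) (len k) (truncation (\<theta> r) (indicator S)) r / c"
      using greedy(3) lincomb_u_embed[of "\<theta> r" k r "indicator S"] \<theta> r flat(4) by (simp add: t_def)
    moreover have "greedy_sum p u 0 x i = 0" for i by (simp add: greedy_sum_def greedy_set_def)
    moreover have "card (A \<inter> {..<t}) \<le> card A" using flat(1) by (intro card_mono) auto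
    ultimately show "\<exists>n\<in>{1..card A}. \<bar>block_apply (G k) (len k) (truncation (\<theta> r) (indicator S)) r / c\<bar>
        \<le> \<bar>greedy_sum p u n x (start k + r)\<bar>"
      using flat(2) by (cases "card (A \<inter> {..<t})") force+
  qed (use p_pos flat(2,6) in \<open>auto simp: x_def\<close>)
  also have "\<dots> \<le> B"
    using B[OF flat(2) greedy(1) _ norm_x] has_expansion_u[OF greedy(1)] by blast
  finally have "(\<Sum>r<len k. \<bar>block_apply (G k) (len k) (truncation (\<theta> r) (indicator S)) r\<bar> powr p) powr (1/p) \<le> B * c"
    using flat(3) p_pos
    by (simp add: abs_divide powr_divide sum_divide_distrib[symmetric] powr_powr sum_nonneg pos_divide_le_eq)
  moreover have "B * c \<le> max B 0 * c" using flat(3) by (intro mult_right_mono) auto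
  ultimately show False
    using mult_root_less_root[OF p_pos _ pos big] by (simp add: c_def[symmetric])
qed

end

section \<open>Haar functions\<close>

definition dyadic_sum :: "(nat \<Rightarrow> real) \<Rightarrow> nat \<Rightarrow> nat \<Rightarrow> real" where
  "dyadic_sum a t j = (\<Sum>x\<in>{j * 2 ^ t..<Suc j * 2 ^ t}. a x)"

lemma dyadic_sum_Suc: "dyadic_sum a (Suc t) j = dyadic_sum a t (2 * j) + dyadic_sum a t (Suc (2 * j))"
proof -
  have "dyadic_sum a t (2 * j) + dyadic_sum a t (Suc (2 * j))
      = (\<Sum>x\<in>{2 * j * 2 ^ t..<Suc (2 * j) * 2 ^ t}. a x) + (\<Sum>x\<in>{Suc (2 * j) * 2 ^ t..<Suc (Suc (2 * j)) * 2 ^ t}. a x)"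
    by (simp add: dyadic_sum_def)
  also have "\<dots> = (\<Sum>x\<in>{2 * j * 2 ^ t..<Suc (Suc (2 * j)) * 2 ^ t}. a x)"
    by (rule sum.atLeastLessThan_concat) auto
  also have "{2 * j * 2 ^ t..<Suc (Suc (2 * j)) * 2 ^ t} = {j * 2 ^ Suc t..<Suc j * 2 ^ Suc t}"
    by (simp add: algebra_simps)
  finally show ?thesis by (simp add: dyadic_sum_def)
qed

lemma dyadic_sum_0: "dyadic_sum a 0 j = a j"
  by (simp add: dyadic_sum_def)

lemma sum_lessThan_double: "(\<Sum>j<2 * n. f j) = (\<Sum>j<n. f (2 * j) + f (Suc (2 * j)))"
  by (induction n) (simp_all add: algebra_simps)

definition dyadic_energy :: "nat \<Rightarrow> (nat \<Rightarrow> real) \<Rightarrow> real \<Rightarrow> nat \<Rightarrow> real" where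
  "dyadic_energy k a r t = (\<Sum>j<2 ^ (k - t). 2 ^ t * \<bar>dyadic_sum a t j / 2 ^ t\<bar> powr r)"

definition haar_energy :: "nat \<Rightarrow> (nat \<Rightarrow> real) \<Rightarrow> real \<Rightarrow> nat \<Rightarrow> real" where
  "haar_energy k a r t = (\<Sum>j<2 ^ (k - Suc t). 2 ^ Suc t * \<bar>(dyadic_sum a t (2 * j) - dyadic_sum a t (Suc (2 * j))) / 2 ^ Suc t\<bar> powr r)"

lemma dyadic_energy_Suc_le:
  assumes "t < k" "r \<ge> 2"
  shows "dyadic_energy k a r (Suc t) + haar_energy k a r t \<le> dyadic_energy k a r t"
proof -
  have e: "(2::nat) ^ (k - t) = 2 * 2 ^ (k - Suc t)"
    using assms by (metis Suc_diff_Suc power_Suc)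
  have "dyadic_energy k a r t = (\<Sum>j<2 ^ (k - Suc t). 2 ^ t * \<bar>dyadic_sum a t (2 * j) / 2 ^ t\<bar> powr r
            + 2 ^ t * \<bar>dyadic_sum a t (Suc (2 * j)) / 2 ^ t\<bar> powr r)"
    unfolding dyadic_energy_def e by (rule sum_lessThan_double)
  moreover have "dyadic_energy k a r (Suc t) + haar_energy k a r t = (\<Sum>j<2 ^ (k - Suc t).
      2 ^ Suc t * \<bar>(dyadic_sum a t (2 * j) + dyadic_sum a t (Suc (2 * j))) / 2 ^ Suc t\<bar> powr r
    + 2 ^ Suc t * \<bar>(dyadic_sum a t (2 * j) - dyadic_sum a t (Suc (2 * j))) / 2 ^ Suc t\<bar> powr r)"
    by (simp add: dyadic_energy_def haar_energy_def dyadic_sum_Suc sum.distrib)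
  moreover have "2 ^ Suc t * \<bar>(X + Y) / 2 ^ Suc t\<bar> powr r + 2 ^ Suc t * \<bar>(X - Y) / 2 ^ Suc t\<bar> powr r
      \<le> 2 ^ t * \<bar>X / 2 ^ t\<bar> powr r + 2 ^ t * \<bar>Y / 2 ^ t\<bar> powr r" for X Y :: real
  proof -
    have c: "\<bar>(X / 2 ^ t + Y / 2 ^ t) / 2\<bar> powr r + \<bar>(X / 2 ^ t - Y / 2 ^ t) / 2\<bar> powr r
        \<le> (\<bar>X / 2 ^ t\<bar> powr r + \<bar>Y / 2 ^ t\<bar> powr r) / 2"
      by (rule clarkson_inequality) (use assms in auto)
    have e1: "(X / 2 ^ t + Y / 2 ^ t) / 2 = (X + Y) / 2 ^ Suc t"
      by (simp add: field_simps)
    have e2: "(X / 2 ^ t - Y / 2 ^ t) / 2 = (X - Y) / 2 ^ Suc t"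
      by (simp add: field_simps)
    from c have "2 ^ Suc t * (\<bar>(X + Y) / 2 ^ Suc t\<bar> powr r + \<bar>(X - Y) / 2 ^ Suc t\<bar> powr r)
        \<le> 2 ^ Suc t * ((\<bar>X / 2 ^ t\<bar> powr r + \<bar>Y / 2 ^ t\<bar> powr r) / 2)"
      unfolding e1 e2 by (intro mult_left_mono) auto
    then show ?thesis by (simp add: algebra_simps)
  qed
  ultimately show ?thesis by (simp only:) (rule sum_mono)
qed

lemma sum_haar_energy_le:
  assumes "r \<ge> 2"
  shows "(\<Sum>t<k. haar_energy k a r t) \<le> (\<Sum>x<2 ^ k. \<bar>a x\<bar> powr r)"
proof -
  have "dyadic_energy k a r m + (\<Sum>t<m. haar_energy k a r t) \<le> dyadic_energy k a r 0" if "m \<le> k" for m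
    using that
  proof (induction m)
    case (Suc m)
    have "dyadic_energy k a r (Suc m) + haar_energy k a r m \<le> dyadic_energy k a r m"
      using Suc.prems assms by (intro dyadic_energy_Suc_le) auto
    then show ?case using Suc by simp
  qed simp
  moreover have "dyadic_energy k a r k \<ge> 0"
    unfolding dyadic_energy_def by (intro sum_nonneg) auto
  moreover have "dyadic_energy k a r 0 = (\<Sum>x<2 ^ k. \<bar>a x\<bar> powr r)"
    by (simp add: dyadic_energy_def dyadic_sum_0)
  ultimately show ?thesis by force
qed

definition dyadic_midpoint :: "nat \<Rightarrow> nat \<Rightarrow> nat \<Rightarrow> bool" where
  "dyadic_midpoint k M t \<longleftrightarrow> t < k \<and> M < 2 ^ k \<and> M mod 2 ^ Suc t = 2 ^ t"

definition haar :: "nat \<Rightarrow> nat \<Rightarrow> nat \<Rightarrow> real" where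
  "haar M t x = (if M - 2 ^ t \<le> x \<and> x < M then 1 else if M \<le> x \<and> x < M + 2 ^ t then -1 else 0)"

(* The Haar function of level t is scaled by 2^-(t+1) and repeated 2^(t+1) times (sign s and
   copy c < 2^t), so that the l_r norm of the kernel's image is exactly the Haar energy; in the
   transposed direction the rows of opposite sign cancel. *)
definition haar_kernel :: "nat \<Rightarrow> nat \<Rightarrow> nat \<Rightarrow> nat \<Rightarrow> nat \<Rightarrow> nat \<Rightarrow> real" where
  "haar_kernel k s M t c x = (if dyadic_midpoint k M t \<and> c < 2 ^ t then (if s = 0 then 1 else -1) / 2 ^ Suc t * haar M t x else 0)"

lemma dyadic_midpoints_eq:
  assumes "t < k"
  shows "{M \<in> {..<(2::nat) ^ k}. M mod 2 ^ Suc t = 2 ^ t} = (\<lambda>j. 2 ^ Suc t * j + 2 ^ t) ` {..<2 ^ (k - Suc t)}"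
proof -
  define D :: nat where "D = 2 ^ t"
  define E :: nat where "E = 2 ^ (k - Suc t)"
  have D0: "D > 0" by (simp add: D_def)
  have k2: "(2::nat) ^ k = 2 * D * E"
    using assms unfolding D_def E_def
    by (metis Suc_leI le_add_diff_inverse power_Suc power_add mult.assoc)
  have s2: "(2::nat) ^ Suc t = 2 * D" by (simp add: D_def)
  show ?thesis unfolding k2 s2 D_def[symmetric] E_def[symmetric]
  proof (intro set_eqI iffI)
    fix M assume "M \<in> {M \<in> {..<2 * D * E}. M mod (2 * D) = D}"
    then have M: "M < 2 * D * E" "M mod (2 * D) = D" by auto
    have "M = 2 * D * (M div (2 * D)) + D" using M(2) by (metis div_mult_mod_eq mult.commute)
    moreover have "M div (2 * D) < E" using M(1) by (simp add: less_mult_imp_div_less mult.commute)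
    ultimately show "M \<in> (\<lambda>j. 2 * D * j + D) ` {..<E}" by auto
  next
    fix M assume "M \<in> (\<lambda>j. 2 * D * j + D) ` {..<E}"
    then obtain j where j: "j < E" "M = 2 * D * j + D" by auto
    have "2 * D * j + D < 2 * D * (j + 1)" using D0 by simp
    also have "\<dots> \<le> 2 * D * E" using j(1) by (intro mult_left_mono) auto
    finally have "M < 2 * D * E" using j by simp
    moreover have "M mod (2 * D) = D" using j D0 by (simp add: add.commute)
    ultimately show "M \<in> {M \<in> {..<2 * D * E}. M mod (2 * D) = D}" by auto
  qed
qed

lemma sum_dyadic_midpoints:
  assumes "t < k"
  shows "(\<Sum>M<(2::nat) ^ k. if dyadic_midpoint k M t then F M else 0)
       = (\<Sum>j<2 ^ (k - Suc t). F (2 ^ Suc t * j + 2 ^ t))"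
proof -
  have "(\<Sum>M<(2::nat) ^ k. if dyadic_midpoint k M t then F M else 0)
      = sum F {M \<in> {..<(2::nat) ^ k}. M mod 2 ^ Suc t = 2 ^ t}"
    using sum.inter_filter[of "{..<(2::nat) ^ k}" F "\<lambda>M. M mod 2 ^ Suc t = 2 ^ t"] assms
    by (simp add: dyadic_midpoint_def)
  also have "\<dots> = sum F ((\<lambda>j. 2 ^ Suc t * j + 2 ^ t) ` {..<2 ^ (k - Suc t)})"
    using dyadic_midpoints_eq[OF assms] by simp
  also have "\<dots> = (\<Sum>j<2 ^ (k - Suc t). F (2 ^ Suc t * j + 2 ^ t))"
    by (subst sum.reindex) (auto simp: inj_on_def)
  finally show ?thesis .
qed

lemma sum_haar_mult:
  assumes "M = 2 ^ Suc t * j + 2 ^ t" "M + 2 ^ t \<le> 2 ^ k"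
  shows "(\<Sum>x<2 ^ k. haar M t x * a x) = dyadic_sum a t (2 * j) - dyadic_sum a t (Suc (2 * j))"
proof -
  have l: "M - 2 ^ t = 2 * j * 2 ^ t" "M = Suc (2 * j) * 2 ^ t" "M + 2 ^ t = Suc (Suc (2 * j)) * 2 ^ t"
    using assms(1) by (simp_all add: algebra_simps)
  have "haar M t x * a x = (if x \<in> {M - 2 ^ t..<M} then a x else 0) - (if x \<in> {M..<M + 2 ^ t} then a x else 0)" for x
    by (auto simp: haar_def)
  then have "(\<Sum>x<2 ^ k. haar M t x * a x) = (\<Sum>x<2 ^ k. if x \<in> {M - 2 ^ t..<M} then a x else 0)
        - (\<Sum>x<2 ^ k. if x \<in> {M..<M + 2 ^ t} then a x else 0)"
    by (simp add: sum_subtractf)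
  also have "(\<Sum>x<2 ^ k. if x \<in> {M - 2 ^ t..<M} then a x else 0) = sum a {M - 2 ^ t..<M}"
    using assms(2) by (intro sum_if_mem_subset) auto
  also have "(\<Sum>x<2 ^ k. if x \<in> {M..<M + 2 ^ t} then a x else 0) = sum a {M..<M + 2 ^ t}"
    using assms(2) by (intro sum_if_mem_subset) auto
  also have "{M - 2 ^ t..<M} = {2 * j * 2 ^ t..<Suc (2 * j) * 2 ^ t}" using l by simp
  also have "{M..<M + 2 ^ t} = {Suc (2 * j) * 2 ^ t..<Suc (Suc (2 * j)) * 2 ^ t}" using l by simp
  also have "sum a {2 * j * 2 ^ t..<Suc (2 * j) * 2 ^ t} - sum a {Suc (2 * j) * 2 ^ t..<Suc (Suc (2 * j)) * 2 ^ t}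
     = dyadic_sum a t (2 * j) - dyadic_sum a t (Suc (2 * j))"
    by (simp only: dyadic_sum_def)
  finally show ?thesis .
qed

lemma dyadic_midpointD:
  assumes "dyadic_midpoint k M t"
  shows "M = 2 ^ Suc t * (M div 2 ^ Suc t) + 2 ^ t" "M + 2 ^ t \<le> 2 ^ k" "2 ^ t \<le> M" "t < k"
proof -
  from assms have a: "t < k" "M < 2 ^ k" "M mod 2 ^ Suc t = 2 ^ t" by (auto simp: dyadic_midpoint_def)
  show m: "M = 2 ^ Suc t * (M div 2 ^ Suc t) + 2 ^ t" using a(3) by (metis div_mult_mod_eq mult.commute)
  show "2 ^ t \<le> M" using m by linarith
  show "t < k" by fact
  define j where "j = M div 2 ^ Suc t"
  have "M \<in> {M \<in> {..<2 ^ k}. M mod 2 ^ Suc t = 2 ^ t}" using a by simp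
  then obtain j' where j': "j' < 2 ^ (k - Suc t)" "M = 2 ^ Suc t * j' + 2 ^ t"
    using dyadic_midpoints_eq[OF a(1)] by auto
  have "M div 2 ^ Suc t = j'" using j'(2) by simp
  then have "j < 2 ^ (k - Suc t)" using j' j_def by simp
  then have "Suc j \<le> 2 ^ (k - Suc t)" by simp
  then have "2 ^ Suc t * Suc j \<le> 2 ^ Suc t * 2 ^ (k - Suc t)" by (intro mult_left_mono) auto
  also have "\<dots> = (2::nat) ^ k" using a(1) by (metis Suc_leI le_add_diff_inverse power_add)
  finally show "M + 2 ^ t \<le> 2 ^ k" using m j_def by simp
qed

lemma sum_kernel_copies:
  "(\<Sum>c<(2::nat) ^ k. if dyadic_midpoint k M t \<and> c < 2 ^ t then v else 0)
    = (if dyadic_midpoint k M t then 2 ^ t * v else (0::real))"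
proof (cases "dyadic_midpoint k M t")
  case True
  then have "(2::nat) ^ t \<le> 2 ^ k" by (intro power_increasing) (auto simp: dyadic_midpoint_def)
  then have "{c \<in> {..<(2::nat) ^ k}. c < 2 ^ t} = {..<2 ^ t}" by (auto intro: less_le_trans)
  then show ?thesis using True by (simp add: sum.inter_filter[symmetric])
qed simp

lemma abs_sum_haar_kernel_mult:
  "\<bar>\<Sum>x<2 ^ k. haar_kernel k s M t c x * a x\<bar>
    = (if dyadic_midpoint k M t \<and> c < 2 ^ t then \<bar>\<Sum>x<2 ^ k. haar M t x * a x\<bar> / 2 ^ Suc t else 0)"
proof (cases "dyadic_midpoint k M t \<and> c < 2 ^ t")
  case True
  define sg :: real where "sg = (if s = 0 then 1 else -1)"
  have "(\<Sum>x<2 ^ k. haar_kernel k s M t c x * a x) = (sg / 2 ^ Suc t) * (\<Sum>x<2 ^ k. haar M t x * a x)"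
    using True by (simp add: haar_kernel_def sg_def sum_distrib_left mult.assoc)
  moreover have "\<bar>sg\<bar> = 1" by (simp add: sg_def)
  ultimately show ?thesis using True by (simp add: abs_mult)
qed (auto simp: haar_kernel_def)

lemma sum_dyadic_midpoints_haar:
  assumes "t < k"
  shows "(\<Sum>M<2 ^ k. if dyadic_midpoint k M t then 2 ^ Suc t * (\<bar>\<Sum>x<2 ^ k. haar M t x * a x\<bar> / 2 ^ Suc t) powr r else 0)
    = haar_energy k a r t"
proof -
  have "(\<Sum>M<2 ^ k. if dyadic_midpoint k M t then 2 ^ Suc t * (\<bar>\<Sum>x<2 ^ k. haar M t x * a x\<bar> / 2 ^ Suc t) powr r else 0)
      = (\<Sum>j<2 ^ (k - Suc t). 2 ^ Suc t * (\<bar>\<Sum>x<2 ^ k. haar (2 ^ Suc t * j + 2 ^ t) t x * a x\<bar> / 2 ^ Suc t) powr r)"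
    by (rule sum_dyadic_midpoints[OF assms])
  also have "\<dots> = haar_energy k a r t"
    unfolding haar_energy_def
  proof (rule sum.cong[OF refl])
    fix j :: nat assume "j \<in> {..<2 ^ (k - Suc t)}"
    then have "dyadic_midpoint k (2 ^ Suc t * j + 2 ^ t) t"
      using dyadic_midpoints_eq[OF assms] assms by (auto simp: dyadic_midpoint_def)
    from dyadic_midpointD(2)[OF this]
    have "(\<Sum>x<2 ^ k. haar (2 ^ Suc t * j + 2 ^ t) t x * a x) = dyadic_sum a t (2 * j) - dyadic_sum a t (Suc (2 * j))"
      by (intro sum_haar_mult) auto
    then show "2 ^ Suc t * (\<bar>\<Sum>x<2 ^ k. haar (2 ^ Suc t * j + 2 ^ t) t x * a x\<bar> / 2 ^ Suc t) powr r
        = 2 ^ Suc t * \<bar>(dyadic_sum a t (2 * j) - dyadic_sum a t (Suc (2 * j))) / 2 ^ Suc t\<bar> powr r"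
      by simp
  qed
  finally show ?thesis .
qed

lemma haar_kernel_contraction:
  assumes "r \<ge> 2"
  shows "(\<Sum>s<2. \<Sum>M<2 ^ k. \<Sum>t<k. \<Sum>c<2 ^ k. \<bar>\<Sum>x<2 ^ k. haar_kernel k s M t c x * a x\<bar> powr r)
         \<le> (\<Sum>x<2 ^ k. \<bar>a x\<bar> powr r)"
proof -
  define V where "V M t = (\<bar>\<Sum>x<2 ^ k. haar M t x * a x\<bar> / 2 ^ Suc t) powr r" for M t
  have "\<bar>\<Sum>x<2 ^ k. haar_kernel k s M t c x * a x\<bar> powr r = (if dyadic_midpoint k M t \<and> c < 2 ^ t then V M t else 0)"
    for s M t c
    by (simp add: abs_sum_haar_kernel_mult V_def)
  then have "(\<Sum>s<2. \<Sum>M<2 ^ k. \<Sum>t<k. \<Sum>c<2 ^ k. \<bar>\<Sum>x<2 ^ k. haar_kernel k s M t c x * a x\<bar> powr r)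
      = (\<Sum>s<(2::nat). \<Sum>M<2 ^ k. \<Sum>t<k. if dyadic_midpoint k M t then 2 ^ t * V M t else 0)"
    by (simp only: sum_kernel_copies)
  also have "\<dots> = (\<Sum>t<k. \<Sum>M<2 ^ k. if dyadic_midpoint k M t then 2 ^ Suc t * V M t else 0)"
    by (subst sum.swap) (simp add: sum_distrib_left mult.assoc if_distrib cong: if_cong)
  also have "\<dots> = (\<Sum>t<k. haar_energy k a r t)"
    unfolding V_def by (intro sum.cong refl sum_dyadic_midpoints_haar) simp
  also have "\<dots> \<le> (\<Sum>x<2 ^ k. \<bar>a x\<bar> powr r)" by (rule sum_haar_energy_le[OF assms])
  finally show ?thesis .
qed

(* Row y < haar_rows k stands for the parameters (s, M, t, c), written in mixed radix as
   y = ((s * 2^k + M) * k + t) * 2^k + c. *)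
definition haar_rows :: "nat \<Rightarrow> nat" where "haar_rows k = 2 * 2 ^ k * k * 2 ^ k"

definition row_copy :: "nat \<Rightarrow> nat \<Rightarrow> nat" where "row_copy k y = y mod 2 ^ k"
definition row_level :: "nat \<Rightarrow> nat \<Rightarrow> nat" where "row_level k y = (y div 2 ^ k) mod k"
definition row_mid :: "nat \<Rightarrow> nat \<Rightarrow> nat" where "row_mid k y = (y div 2 ^ k div k) mod 2 ^ k"
definition row_sign :: "nat \<Rightarrow> nat \<Rightarrow> nat" where "row_sign k y = y div 2 ^ k div k div 2 ^ k"

definition haar_row :: "nat \<Rightarrow> nat \<Rightarrow> nat \<Rightarrow> real" where
  "haar_row k y x = haar_kernel k (row_sign k y) (row_mid k y) (row_level k y) (row_copy k y) x"

lemma row_decode: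
  assumes "s < 2" "M < 2 ^ k" "t < k" "c < 2 ^ k"
  defines "y \<equiv> ((s * 2 ^ k + M) * k + t) * 2 ^ k + c"
  shows "row_copy k y = c" "row_level k y = t" "row_mid k y = M" "row_sign k y = s"
proof -
  have N0: "(2::nat) ^ k > 0" by simp
  have d1: "y div 2 ^ k = (s * 2 ^ k + M) * k + t" using assms(4) by (simp add: y_def)
  show "row_copy k y = c" using assms(4) by (simp add: row_copy_def y_def)
  show "row_level k y = t" using assms(3) by (simp add: row_level_def d1)
  have d2: "y div 2 ^ k div k = s * 2 ^ k + M" using assms(3) by (simp add: d1)
  show "row_mid k y = M" using assms(2) by (simp add: row_mid_def d2)
  show "row_sign k y = s" using assms(2) by (simp add: row_sign_def d2)
qed

lemma sum_haar_rows: "(\<Sum>y<haar_rows k. f y) = (\<Sum>s<2. \<Sum>M<2 ^ k. \<Sum>t<k. \<Sum>c<2 ^ k. f (((s * 2 ^ k + M) * k + t) * 2 ^ k + c))"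
  unfolding haar_rows_def sum_lessThan_mult by simp

lemma sum_haar_rows_kernel: "(\<Sum>y<haar_rows k. g y (haar_row k y)) = (\<Sum>s<2. \<Sum>M<2 ^ k. \<Sum>t<k. \<Sum>c<2 ^ k.
     g (((s * 2 ^ k + M) * k + t) * 2 ^ k + c) (haar_kernel k s M t c))"
  unfolding sum_haar_rows haar_row_def by (intro sum.cong refl) (simp add: row_decode)

lemma haar_row_contraction:
  assumes "r \<ge> 2"
  shows "(\<Sum>y<haar_rows k. \<bar>\<Sum>x<2 ^ k. haar_row k y x * a x\<bar> powr r) \<le> (\<Sum>x<2 ^ k. \<bar>a x\<bar> powr r)"
  using haar_kernel_contraction[OF assms, of k a]
  by (subst sum_haar_rows_kernel[where g="\<lambda>y h. \<bar>\<Sum>x<2 ^ k. h x * a x\<bar> powr r"]) simp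

lemma dyadic_sum_1: "dyadic_sum (\<lambda>_. 1) t j = 2 ^ t"
  by (simp add: dyadic_sum_def algebra_simps)

lemma sum_haar:
  assumes "dyadic_midpoint k M t"
  shows "(\<Sum>x<(2::nat) ^ k. haar M t x) = 0"
  using sum_haar_mult[OF dyadic_midpointD(1)[OF assms] dyadic_midpointD(2)[OF assms], of "\<lambda>_. 1"]
  by (simp add: dyadic_sum_1)

lemma sum_haar_below_midpoint:
  assumes "dyadic_midpoint k M t"
  shows "(\<Sum>x<(2::nat) ^ k. if x < M then haar M t x else 0) = 2 ^ t"
proof -
  have b: "2 ^ t \<le> M" "M + 2 ^ t \<le> 2 ^ k" using dyadic_midpointD[OF assms] by auto
  have "(\<Sum>x<(2::nat) ^ k. if x < M then haar M t x else 0) = (\<Sum>x<(2::nat) ^ k. if x \<in> {M - 2 ^ t..<M} then 1 else 0)"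
    by (intro sum.cong) (auto simp: haar_def)
  also have "\<dots> = (\<Sum>x\<in>{M - 2 ^ t..<M}. (1::real))"
    using b by (intro sum_if_mem_subset) auto
  also have "\<dots> = 2 ^ t" using b by simp
  finally show ?thesis .
qed

lemma sum_dyadic_midpoint_weights:
  "2 * (\<Sum>M<(2::nat) ^ k. \<Sum>t<k. if dyadic_midpoint k M t then (2::real) ^ t else 0) = real k * 2 ^ k"
proof -
  have "(\<Sum>M<(2::nat) ^ k. \<Sum>t<k. if dyadic_midpoint k M t then (2::real) ^ t else 0)
      = (\<Sum>t<k. \<Sum>M<(2::nat) ^ k. if dyadic_midpoint k M t then (2::real) ^ t else 0)" by (rule sum.swap)
  also have "\<dots> = (\<Sum>t<k. 2 ^ k / 2)"
  proof (rule sum.cong[OF refl])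
    fix t assume "t \<in> {..<k}"
    then have tk: "t < k" by simp
    have "(\<Sum>M<(2::nat) ^ k. if dyadic_midpoint k M t then (2::real) ^ t else 0)
        = (\<Sum>j<(2::nat) ^ (k - Suc t). (2::real) ^ t)" by (rule sum_dyadic_midpoints[OF tk])
    also have "\<dots> = 2 ^ (k - Suc t) * 2 ^ t" by simp
    also have "\<dots> = 2 ^ k / 2"
    proof -
      have "(2::real) ^ (k - Suc t) * 2 ^ t * 2 = 2 ^ (k - Suc t + Suc t)" by (simp add: power_add)
      also have "k - Suc t + Suc t = k" using tk by simp
      finally show ?thesis by simp
    qed
    finally show "(\<Sum>M<(2::nat) ^ k. if dyadic_midpoint k M t then (2::real) ^ t else 0) = 2 ^ k / 2" .
  qed
  finally show ?thesis by simp
qed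

lemma count_haar_kernels:
  "(\<Sum>s<(2::nat). \<Sum>M<(2::nat) ^ k. \<Sum>t<k. \<Sum>c<(2::nat) ^ k. if dyadic_midpoint k M t \<and> c < 2 ^ t then (1::real) else 0) = real k * 2 ^ k"
proof -
  have "(\<Sum>c<(2::nat) ^ k. if dyadic_midpoint k M t \<and> c < 2 ^ t then (1::real) else 0)
      = (if dyadic_midpoint k M t then 2 ^ t else 0)" for M t
    using sum_kernel_copies[of k M t 1] by simp
  then show ?thesis using sum_dyadic_midpoint_weights[of k] by simp
qed

lemma sum_haar_kernel: "(\<Sum>x<(2::nat) ^ k. haar_kernel k s M t c x) = 0"
proof (cases "dyadic_midpoint k M t \<and> c < 2 ^ t")
  case True
  then have "(\<Sum>x<(2::nat) ^ k. haar_kernel k s M t c x) = (if s = 0 then 1 else -1) / 2 ^ Suc t * (\<Sum>x<(2::nat) ^ k. haar M t x)"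
    by (simp add: haar_kernel_def sum_distrib_left)
  then show ?thesis using sum_haar True by simp
next
  case False
  then have "\<forall>x. haar_kernel k s M t c x = 0" unfolding haar_kernel_def by auto
  then show ?thesis by simp
qed

lemma abs_sum_haar_kernel_below_midpoint:
  "\<bar>\<Sum>x<(2::nat) ^ k. haar_kernel k s M t c x * (if x < M then 1 else 0)\<bar> = (if dyadic_midpoint k M t \<and> c < 2 ^ t then 1/2 else 0)"
proof (cases "dyadic_midpoint k M t \<and> c < 2 ^ t")
  case True
  have "(\<Sum>x<(2::nat) ^ k. haar_kernel k s M t c x * (if x < M then 1 else 0))
      = (if s = 0 then 1 else -1) / 2 ^ Suc t * (\<Sum>x<(2::nat) ^ k. if x < M then haar M t x else 0)"
    using True by (simp add: haar_kernel_def sum_distrib_left if_distrib cong: if_cong)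
  also have "\<dots> = (if s = 0 then 1 else -1) / 2 ^ Suc t * 2 ^ t" using sum_haar_below_midpoint True by simp
  also have "\<dots> = (if s = 0 then 1/2 else -1/2)" by (simp add: field_simps)
  finally show ?thesis using True by simp
next
  case False
  then have "\<forall>x. haar_kernel k s M t c x = 0" unfolding haar_kernel_def by auto
  then show ?thesis using False by (simp del: de_Morgan_conj)
qed

lemma haar_row_sum_eq_0: "(\<Sum>x<(2::nat) ^ k. haar_row k y x) = 0"
  by (simp add: haar_row_def sum_haar_kernel)

section \<open>The two block operators\<close>

definition block_len :: "nat \<Rightarrow> nat" where
  "block_len k = 2 ^ k + haar_rows k"

lemma sum_block_len: "(\<Sum>i<block_len k. f i) = (\<Sum>i<2 ^ k. f i) + (\<Sum>y<haar_rows k. f (2 ^ k + y))"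
  unfolding block_len_def by (rule sum_lessThan_add)

definition haar_analysis :: "nat \<Rightarrow> nat \<Rightarrow> nat \<Rightarrow> real" where
  "haar_analysis k i j = (if 2 ^ k \<le> i \<and> i < block_len k \<and> j < 2 ^ k then haar_row k (i - 2 ^ k) j else 0)"

definition haar_synthesis :: "nat \<Rightarrow> nat \<Rightarrow> nat \<Rightarrow> real" where
  "haar_synthesis k i j = haar_analysis k j i"

lemma haar_analysis_nilpotent: "haar_analysis k i j \<noteq> 0 \<Longrightarrow> haar_analysis k j l = 0"
  by (auto simp: haar_analysis_def split: if_splits)

lemma haar_synthesis_nilpotent: "haar_synthesis k i j \<noteq> 0 \<Longrightarrow> haar_synthesis k j l = 0"
  by (auto simp: haar_synthesis_def haar_analysis_def split: if_splits)

lemma haar_analysis_row: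
  assumes "y < haar_rows k"
  shows "(\<Sum>j<block_len k. haar_analysis k (2 ^ k + y) j * \<beta> j) = (\<Sum>x<2 ^ k. haar_row k y x * \<beta> x)"
proof -
  have "(\<Sum>j<block_len k. haar_analysis k (2 ^ k + y) j * \<beta> j) = (\<Sum>j<2 ^ k. haar_analysis k (2 ^ k + y) j * \<beta> j)"
    by (rule sum_lessThan_vanishing_tail) (auto simp: haar_analysis_def block_len_def)
  also have "\<dots> = (\<Sum>x<2 ^ k. haar_row k y x * \<beta> x)"
    using assms by (intro sum.cong) (auto simp: haar_analysis_def block_len_def)
  finally show ?thesis .
qed

lemma block_apply_haar_analysis:
  shows "r < 2 ^ k \<Longrightarrow> block_apply (haar_analysis k) (block_len k) \<beta> r = \<beta> r"
    and "y < haar_rows k \<Longrightarrow> block_apply (haar_analysis k) (block_len k) \<beta> (2 ^ k + y)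
           = \<beta> (2 ^ k + y) + (\<Sum>x<2 ^ k. haar_row k y x * \<beta> x)"
proof -
  assume "r < 2 ^ k"
  then have "haar_analysis k r j = 0" for j by (simp add: haar_analysis_def)
  then show "block_apply (haar_analysis k) (block_len k) \<beta> r = \<beta> r" by (simp add: block_apply_def)
next
  assume "y < haar_rows k"
  then show "block_apply (haar_analysis k) (block_len k) \<beta> (2 ^ k + y)
      = \<beta> (2 ^ k + y) + (\<Sum>x<2 ^ k. haar_row k y x * \<beta> x)"
    unfolding block_apply_def by (simp only: haar_analysis_row)
qed

lemma block_apply_haar_synthesis:
  shows "r < 2 ^ k \<Longrightarrow> block_apply (haar_synthesis k) (block_len k) \<beta> r
           = \<beta> r + (\<Sum>y<haar_rows k. haar_row k y r * \<beta> (2 ^ k + y))"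
    and "block_apply (haar_synthesis k) (block_len k) \<beta> (2 ^ k + y) = \<beta> (2 ^ k + y)"
proof -
  assume r: "r < 2 ^ k"
  have "(\<Sum>j<block_len k. haar_synthesis k r j * \<beta> j)
      = (\<Sum>j<2 ^ k. haar_analysis k j r * \<beta> j) + (\<Sum>y<haar_rows k. haar_analysis k (2 ^ k + y) r * \<beta> (2 ^ k + y))"
    unfolding haar_synthesis_def by (rule sum_block_len)
  also have "(\<Sum>j<2 ^ k. haar_analysis k j r * \<beta> j) = 0"
    by (intro sum.neutral) (simp add: haar_analysis_def)
  also have "(\<Sum>y<haar_rows k. haar_analysis k (2 ^ k + y) r * \<beta> (2 ^ k + y))
      = (\<Sum>y<haar_rows k. haar_row k y r * \<beta> (2 ^ k + y))"
    using r by (intro sum.cong) (simp_all add: haar_analysis_def block_len_def)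
  finally show "block_apply (haar_synthesis k) (block_len k) \<beta> r
      = \<beta> r + (\<Sum>y<haar_rows k. haar_row k y r * \<beta> (2 ^ k + y))"
    by (simp add: block_apply_def)
next
  have "haar_synthesis k (2 ^ k + y) j = 0" for j by (simp add: haar_synthesis_def haar_analysis_def)
  then show "block_apply (haar_synthesis k) (block_len k) \<beta> (2 ^ k + y) = \<beta> (2 ^ k + y)"
    by (simp add: block_apply_def)
qed

lemma haar_analysis_contraction:
  assumes "p \<ge> 2"
  shows "(\<Sum>i<block_len k. \<bar>\<Sum>j<block_len k. haar_analysis k i j * \<beta> j\<bar> powr p) \<le> (\<Sum>i<block_len k. \<bar>\<beta> i\<bar> powr p)"
proof -
  have "(\<Sum>i<block_len k. \<bar>\<Sum>j<block_len k. haar_analysis k i j * \<beta> j\<bar> powr p)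
      = (\<Sum>i<2 ^ k. \<bar>\<Sum>j<block_len k. haar_analysis k i j * \<beta> j\<bar> powr p)
        + (\<Sum>y<haar_rows k. \<bar>\<Sum>j<block_len k. haar_analysis k (2 ^ k + y) j * \<beta> j\<bar> powr p)"
    by (rule sum_block_len)
  also have "(\<Sum>i<2 ^ k. \<bar>\<Sum>j<block_len k. haar_analysis k i j * \<beta> j\<bar> powr p) = 0"
    by (intro sum.neutral) (simp add: haar_analysis_def)
  also have "(\<Sum>y<haar_rows k. \<bar>\<Sum>j<block_len k. haar_analysis k (2 ^ k + y) j * \<beta> j\<bar> powr p)
      = (\<Sum>y<haar_rows k. \<bar>\<Sum>x<2 ^ k. haar_row k y x * \<beta> x\<bar> powr p)"
    by (intro sum.cong) (simp_all add: haar_analysis_row)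
  also have "\<dots> \<le> (\<Sum>x<2 ^ k. \<bar>\<beta> x\<bar> powr p)" by (rule haar_row_contraction[OF assms])
  also have "\<dots> \<le> (\<Sum>i<block_len k. \<bar>\<beta> i\<bar> powr p)" unfolding sum_block_len by (simp add: sum_nonneg)
  finally show ?thesis by simp
qed

lemma haar_synthesis_contraction:
  assumes "1 < p" "p \<le> 2"
  shows "(\<Sum>i<block_len k. \<bar>\<Sum>j<block_len k. haar_synthesis k i j * \<beta> j\<bar> powr p) \<le> (\<Sum>i<block_len k. \<bar>\<beta> i\<bar> powr p)"
proof -
  define q where "q = p / (p - 1)"
  have pq: "1/p + 1/q = 1" and q: "2 \<le> q" using assms by (simp_all add: q_def field_simps)
  show ?thesis
    unfolding haar_synthesis_def
    by (rule transpose_contraction[OF finite_lessThan finite_lessThan assms(1) pq haar_analysis_contraction[OF q]])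
qed

lemma haar_analysis_flat:
  "(\<Sum>r<block_len k. \<bar>block_apply (haar_analysis k) (block_len k) (indicator {..<2 ^ k}) r\<bar> powr p) = 2 ^ k"
proof -
  define f where "f r = \<bar>block_apply (haar_analysis k) (block_len k) (indicator {..<2 ^ k}) r\<bar> powr p" for r
  have "(\<Sum>r<2 ^ k. f r) = (\<Sum>r<(2::nat) ^ k. 1)"
    by (intro sum.cong refl) (simp add: f_def block_apply_haar_analysis)
  moreover have "(\<Sum>y<haar_rows k. f (2 ^ k + y)) = 0"
  proof (intro sum.neutral ballI)
    fix y assume "y \<in> {..<haar_rows k}"
    then have "block_apply (haar_analysis k) (block_len k) (indicator {..<2 ^ k}) (2 ^ k + y)
        = (\<Sum>x<2 ^ k. haar_row k y x)"
      by (simp add: block_apply_haar_analysis)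
    then show "f (2 ^ k + y) = 0" by (simp add: f_def haar_row_sum_eq_0)
  qed
  ultimately show ?thesis unfolding f_def[symmetric] sum_block_len by simp
qed

(* Cut at the midpoint M of row r's Haar function, the partial sum sees only its positive half,
   which gives the value +-1/2 on each of the k * 2^k active rows. *)
lemma haar_analysis_flat_partial:
  "(1/2) powr p * (real k * 2 ^ k)
    \<le> (\<Sum>r<block_len k. \<bar>block_apply (haar_analysis k) (block_len k)
          (truncation (row_mid k (r - 2 ^ k)) (indicator {..<2 ^ k})) r\<bar> powr p)"
proof -
  define f where "f r = \<bar>block_apply (haar_analysis k) (block_len k)
      (truncation (row_mid k (r - 2 ^ k)) (indicator {..<2 ^ k})) r\<bar> powr p" for r
  have row: "f (2 ^ k + y) = \<bar>\<Sum>x<2 ^ k. haar_row k y x * (if x < row_mid k y then 1 else 0)\<bar> powr p"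
    if "y < haar_rows k" for y
  proof -
    have "(\<Sum>x<2 ^ k. haar_row k y x * truncation (row_mid k y) (indicator {..<2 ^ k}) x)
        = (\<Sum>x<2 ^ k. haar_row k y x * (if x < row_mid k y then 1 else 0))"
      by (intro sum.cong refl) (simp add: truncation_def)
    then show ?thesis
      using that by (simp add: f_def block_apply_haar_analysis truncation_def)
  qed
  have "(\<Sum>y<haar_rows k. f (2 ^ k + y))
      = (\<Sum>y<haar_rows k. \<bar>\<Sum>x<2 ^ k. haar_row k y x * (if x < row_mid k y then 1 else 0)\<bar> powr p)"
    by (intro sum.cong refl) (simp add: row)
  also have "\<dots> = (\<Sum>s<2. \<Sum>M<(2::nat) ^ k. \<Sum>t<k. \<Sum>c<(2::nat) ^ k.
          \<bar>\<Sum>x<2 ^ k. haar_kernel k s M t c x * (if x < M then 1 else 0)\<bar> powr p)"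
    unfolding sum_haar_rows haar_row_def by (intro sum.cong refl) (simp add: row_decode)
  also have "\<dots> = (\<Sum>s<(2::nat). \<Sum>M<(2::nat) ^ k. \<Sum>t<k. \<Sum>c<(2::nat) ^ k.
      (1/2) powr p * (if dyadic_midpoint k M t \<and> c < 2 ^ t then (1::real) else 0))"
    unfolding abs_sum_haar_kernel_below_midpoint by (intro sum.cong refl) simp
  also have "\<dots> = (1/2) powr p * (real k * 2 ^ k)"
    by (simp only: sum_distrib_left[symmetric] count_haar_kernels)
  finally have "(\<Sum>y<haar_rows k. f (2 ^ k + y)) = (1/2) powr p * (real k * 2 ^ k)" .
  moreover have "(\<Sum>r<2 ^ k. f r) \<ge> 0" by (auto simp: f_def intro!: sum_nonneg)
  ultimately show ?thesis unfolding f_def[symmetric] sum_block_len by linarith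
qed

lemma flat_partial_sums_unbounded_haar_analysis:
  "flat_partial_sums_unbounded p block_len haar_analysis"
  unfolding flat_partial_sums_unbounded_def
proof
  fix F
  obtain k :: nat where k: "F * 2 powr p < real k" using reals_Archimedean2 by blast
  have "(1/2) powr p * real k = real k / 2 powr p" by (simp add: powr_divide)
  then have "F \<le> (1/2) powr p * real k" using k by (simp add: pos_le_divide_eq)
  then have big: "F * 2 ^ k \<le> (1/2) powr p * (real k * 2 ^ k)"
    by (simp add: mult.assoc[symmetric] mult_right_mono)
  show "\<exists>k S \<theta>. S \<subseteq> {..<block_len k} \<and> (\<forall>r<block_len k. \<theta> r \<le> block_len k) \<and>
      0 < (\<Sum>r<block_len k. \<bar>block_apply (haar_analysis k) (block_len k) (indicator S) r\<bar> powr p) \<and>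
      F * (\<Sum>r<block_len k. \<bar>block_apply (haar_analysis k) (block_len k) (indicator S) r\<bar> powr p)
        \<le> (\<Sum>r<block_len k. \<bar>block_apply (haar_analysis k) (block_len k) (truncation (\<theta> r) (indicator S)) r\<bar> powr p)"
  proof (intro exI[of _ k] exI[of _ "{..<2 ^ k}"] exI[of _ "\<lambda>r. row_mid k (r - 2 ^ k)"] conjI allI impI)
    show "{..<2 ^ k} \<subseteq> {..<block_len k}" by (auto simp: block_len_def)
    show "row_mid k (r - 2 ^ k) \<le> block_len k" for r
    proof -
      have "row_mid k (r - 2 ^ k) < 2 ^ k" by (simp add: row_mid_def)
      then show ?thesis by (simp add: block_len_def)
    qed
  qed (use big haar_analysis_flat_partial[of p k] in \<open>simp_all only: haar_analysis_flat\<close>, simp)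
qed

definition active_row :: "nat \<Rightarrow> nat \<Rightarrow> bool" where
  "active_row k y \<longleftrightarrow> dyadic_midpoint k (row_mid k y) (row_level k y) \<and> row_copy k y < 2 ^ row_level k y"

definition active_coordinates :: "nat \<Rightarrow> nat set" where
  "active_coordinates k = {r. 2 ^ k \<le> r \<and> r < block_len k \<and> active_row k (r - 2 ^ k)}"

lemma haar_row_inactive: "\<not> active_row k y \<Longrightarrow> haar_row k y x = 0"
  unfolding haar_row_def haar_kernel_def active_row_def by auto

lemma indicator_active_coordinates:
  "y < haar_rows k \<Longrightarrow> indicator (active_coordinates k) (2 ^ k + y) = (if active_row k y then 1 else 0)"
  by (simp add: active_coordinates_def block_len_def indicator_def)

lemma haar_column_sum_eq_0: "(\<Sum>y<haar_rows k. haar_row k y x) = 0"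
proof -
  have "(\<Sum>y<haar_rows k. haar_row k y x) = (\<Sum>s<(2::nat). \<Sum>M<(2::nat) ^ k. \<Sum>t<k. \<Sum>c<(2::nat) ^ k. haar_kernel k s M t c x)"
    unfolding sum_haar_rows haar_row_def by (intro sum.cong refl) (simp add: row_decode)
  also have "\<dots> = 0"
  proof -
    have "haar_kernel k (Suc 0) M t c x = - haar_kernel k 0 M t c x" for M t c
      by (simp add: haar_kernel_def)
    then show ?thesis by (simp add: numeral_2_eq_2 sum_negf)
  qed
  finally show ?thesis .
qed

lemma haar_synthesis_flat:
  "(\<Sum>r<block_len k. \<bar>block_apply (haar_synthesis k) (block_len k) (indicator (active_coordinates k)) r\<bar> powr p)
    = real k * 2 ^ k"
proof -
  define f where "f r = \<bar>block_apply (haar_synthesis k) (block_len k) (indicator (active_coordinates k)) r\<bar> powr p" for r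
  have "f r = 0" if "r < 2 ^ k" for r
  proof -
    have "(\<Sum>y<haar_rows k. haar_row k y r * indicator (active_coordinates k) (2 ^ k + y))
        = (\<Sum>y<haar_rows k. haar_row k y r)"
      by (intro sum.cong refl) (simp add: indicator_active_coordinates haar_row_inactive)
    then show ?thesis
      using that by (simp add: f_def block_apply_haar_synthesis haar_column_sum_eq_0 active_coordinates_def)
  qed
  then have "(\<Sum>r<2 ^ k. f r) = 0" by simp
  moreover have "(\<Sum>y<haar_rows k. f (2 ^ k + y)) = (\<Sum>y<haar_rows k. if active_row k y then 1 else 0)"
    by (intro sum.cong refl) (simp add: f_def block_apply_haar_synthesis indicator_active_coordinates)
  moreover have "(\<Sum>y<haar_rows k. if active_row k y then 1 else 0)
      = (\<Sum>s<(2::nat). \<Sum>M<(2::nat) ^ k. \<Sum>t<k. \<Sum>c<(2::nat) ^ k. if dyadic_midpoint k M t \<and> c < 2 ^ t then (1::real) else 0)"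
    unfolding sum_haar_rows active_row_def by (intro sum.cong refl) (simp add: row_decode)
  ultimately show ?thesis unfolding f_def[symmetric] sum_block_len count_haar_kernels by simp
qed

definition overlap_count :: "nat \<Rightarrow> nat \<Rightarrow> real" where
  "overlap_count k r = (\<Sum>M<(2::nat) ^ k. \<Sum>t<k. if dyadic_midpoint k M t \<and> M \<le> r \<and> r < M + 2 ^ t then 1 else 0)"

lemma overlap_count_nonneg: "0 \<le> overlap_count k r"
  by (auto simp: overlap_count_def intro!: sum_nonneg)

lemma sum_overlap_count: "(\<Sum>r<(2::nat) ^ k. overlap_count k r) = real k * 2 ^ k / 2"
proof -
  have "(\<Sum>r<(2::nat) ^ k. if dyadic_midpoint k M t \<and> M \<le> r \<and> r < M + 2 ^ t then (1::real) else 0)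
      = (if dyadic_midpoint k M t then 2 ^ t else 0)" for M t
  proof (cases "dyadic_midpoint k M t")
    case True
    then have "M + 2 ^ t \<le> 2 ^ k" using dyadic_midpointD(2) by blast
    then have "(\<Sum>r<(2::nat) ^ k. if r \<in> {M..<M + 2 ^ t} then (1::real) else 0) = 2 ^ t"
      by (subst sum_if_mem_subset) auto
    then show ?thesis using True by simp
  qed simp
  then have "(\<Sum>r<(2::nat) ^ k. overlap_count k r) = (\<Sum>M<(2::nat) ^ k. \<Sum>t<k. if dyadic_midpoint k M t then (2::real) ^ t else 0)"
    unfolding overlap_count_def by (subst sum.swap) (simp add: sum.swap[of _ "{..<k}"])
  also have "\<dots> = real k * 2 ^ k / 2" using sum_dyadic_midpoint_weights[of k] by simp
  finally show ?thesis .
qed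

lemma haar_synthesis_partial_at:
  assumes r: "r < 2 ^ k"
  shows "block_apply (haar_synthesis k) (block_len k) (truncation (2 ^ k + Suc r * k * 2 ^ k) (indicator (active_coordinates k))) r
    = - overlap_count k r / 2"
proof -
  define n where "n = Suc r * k * 2 ^ k"
  have "Suc r * k * 2 ^ k \<le> 2 ^ k * k * 2 ^ k" using r by (intro mult_right_mono) auto
  then have n: "n \<le> haar_rows k" by (simp add: n_def haar_rows_def)
  have "block_apply (haar_synthesis k) (block_len k) (truncation (2 ^ k + n) (indicator (active_coordinates k))) r
      = (\<Sum>y<haar_rows k. haar_row k y r * truncation (2 ^ k + n) (indicator (active_coordinates k)) (2 ^ k + y))"
    using r by (simp add: block_apply_haar_synthesis truncation_def active_coordinates_def)
  also have "\<dots> = (\<Sum>y<n. haar_row k y r)"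
    by (rule sum_lessThan_vanishing_tail[OF n, THEN trans], simp add: truncation_def)
       (intro sum.cong refl, use n in \<open>auto simp: truncation_def indicator_active_coordinates haar_row_inactive\<close>)
  \<comment> \<open>the first \<open>n\<close> rows are those of sign \<open>0\<close> whose midpoint is at most \<open>r\<close>\<close>
  also have "\<dots> = (\<Sum>M<Suc r. \<Sum>t<k. \<Sum>c<(2::nat) ^ k. haar_kernel k 0 M t c r)"
    unfolding n_def sum_lessThan_mult haar_row_def
    using r by (intro sum.cong refl) (simp add: row_decode[of 0, simplified])
  also have "\<dots> = (\<Sum>M<Suc r. \<Sum>t<k. if dyadic_midpoint k M t \<and> r < M + 2 ^ t then - 1 / 2 else 0)"
  proof (intro sum.cong refl)
    fix M t assume "M \<in> {..<Suc r}"
    then have "haar M t r / 2 ^ Suc t * 2 ^ t = (if r < M + 2 ^ t then - 1 / 2 else 0)"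
      by (auto simp: haar_def)
    then show "(\<Sum>c<(2::nat) ^ k. haar_kernel k 0 M t c r) = (if dyadic_midpoint k M t \<and> r < M + 2 ^ t then - 1 / 2 else 0)"
      using sum_kernel_copies[of k M t "haar M t r / 2 ^ Suc t"]
      by (auto simp: haar_kernel_def if_distrib mult.commute cong: if_cong)
  qed
  also have "\<dots> = (- 1 / 2) * (\<Sum>M<Suc r. \<Sum>t<k. if dyadic_midpoint k M t \<and> r < M + 2 ^ t then 1 else 0)"
    unfolding sum_distrib_left by (intro sum.cong refl) simp
  also have "(\<Sum>M<Suc r. \<Sum>t<k. if dyadic_midpoint k M t \<and> r < M + 2 ^ t then (1::real) else 0) = overlap_count k r"
    unfolding overlap_count_def
    by (rule sym, rule trans[OF sum_lessThan_vanishing_tail[of "Suc r"]]) (use r in \<open>auto intro!: sum.cong sum.neutral\<close>)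
  finally show ?thesis by (simp add: n_def)
qed

lemma haar_synthesis_flat_partial:
  assumes "1 < p"
  shows "(real k * 2 ^ k / 4) powr p / (2 ^ k) powr (p - 1)
    \<le> (\<Sum>r<block_len k. \<bar>block_apply (haar_synthesis k) (block_len k)
          (truncation (if r < 2 ^ k then 2 ^ k + Suc r * k * 2 ^ k else block_len k)
            (indicator (active_coordinates k))) r\<bar> powr p)"
    (is "_ \<le> (\<Sum>r<block_len k. ?f r)")
proof -
  have total: "(\<Sum>r<(2::nat) ^ k. overlap_count k r / 2) = real k * 2 ^ k / 4"
    using sum_overlap_count[of k] by (simp add: sum_divide_distrib[symmetric])
  have "(\<Sum>r<(2::nat) ^ k. overlap_count k r / 2) powr p
      \<le> real (card {..<(2::nat) ^ k}) powr (p - 1) * (\<Sum>r<(2::nat) ^ k. (overlap_count k r / 2) powr p)"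
    by (rule power_mean_inequality) (use assms overlap_count_nonneg in auto)
  then have "(real k * 2 ^ k / 4) powr p
      \<le> real (card {..<(2::nat) ^ k}) powr (p - 1) * (\<Sum>r<(2::nat) ^ k. (overlap_count k r / 2) powr p)"
    by (simp only: total)
  also have "(\<Sum>r<(2::nat) ^ k. (overlap_count k r / 2) powr p) = (\<Sum>r<2 ^ k. ?f r)"
    using haar_synthesis_partial_at overlap_count_nonneg by (intro sum.cong refl) simp
  also have "real (card {..<(2::nat) ^ k}) = 2 ^ k" by simp
  also have "(2 ^ k) powr (p - 1) * (\<Sum>r<2 ^ k. ?f r) \<le> (2 ^ k) powr (p - 1) * (\<Sum>r<block_len k. ?f r)"
    unfolding sum_block_len by (intro mult_left_mono) (simp_all add: sum_nonneg)
  finally show ?thesis by (simp add: divide_le_eq mult.commute)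
qed

lemma flat_partial_sums_unbounded_haar_synthesis:
  assumes p: "1 < p"
  shows "flat_partial_sums_unbounded p block_len haar_synthesis"
  unfolding flat_partial_sums_unbounded_def
proof
  fix F
  obtain k :: nat where "0 < k" "4 powr p * F \<le> real k powr (p - 1)"
    using ex_nat_powr_ge[of "p - 1" "4 powr p * F"] p by auto
  then have "F \<le> real k powr (p - 1) / 4 powr p" by (simp add: pos_le_divide_eq mult.commute)
  then have "F * (real k * 2 ^ k) \<le> real k powr (p - 1) / 4 powr p * (real k * 2 ^ k)"
    by (intro mult_right_mono) auto
  also have "\<dots> = (real k * 2 ^ k / 4) powr p / (2 ^ k) powr (p - 1)"
    using \<open>0 < k\<close> by (simp add: powr_mult powr_divide powr_diff field_simps)
  finally have big: "F * (real k * 2 ^ k) \<le> (real k * 2 ^ k / 4) powr p / (2 ^ k) powr (p - 1)" .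
  show "\<exists>k S \<theta>. S \<subseteq> {..<block_len k} \<and> (\<forall>r<block_len k. \<theta> r \<le> block_len k) \<and>
      0 < (\<Sum>r<block_len k. \<bar>block_apply (haar_synthesis k) (block_len k) (indicator S) r\<bar> powr p) \<and>
      F * (\<Sum>r<block_len k. \<bar>block_apply (haar_synthesis k) (block_len k) (indicator S) r\<bar> powr p)
        \<le> (\<Sum>r<block_len k. \<bar>block_apply (haar_synthesis k) (block_len k) (truncation (\<theta> r) (indicator S)) r\<bar> powr p)"
  proof (intro exI[of _ k] exI[of _ "active_coordinates k"]
      exI[of _ "\<lambda>r. if r < 2 ^ k then 2 ^ k + Suc r * k * 2 ^ k else block_len k"] conjI allI impI)
    show "active_coordinates k \<subseteq> {..<block_len k}" by (auto simp: active_coordinates_def)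
    show "(if r < 2 ^ k then 2 ^ k + Suc r * k * 2 ^ k else block_len k) \<le> block_len k" for r
    proof (cases "r < 2 ^ k")
      case True
      then have "Suc r * k * 2 ^ k \<le> 2 ^ k * k * 2 ^ k" by (intro mult_right_mono) auto
      then have "Suc r * k * 2 ^ k \<le> haar_rows k" by (simp add: haar_rows_def)
      then show ?thesis using True by (simp add: block_len_def)
    qed simp
  qed (use big haar_synthesis_flat_partial[OF p, of k] \<open>0 < k\<close> in \<open>simp_all only: haar_synthesis_flat\<close>, simp)
qed

lemma block_len_pos: "0 < block_len k"
  by (simp add: block_len_def)

lemma block_perturbation_haar_analysis:
  assumes "2 \<le> p"
  shows "block_perturbation block_len p haar_analysis"
proof unfold_locales
  show "haar_analysis k j l = 0" if "haar_analysis k i j \<noteq> 0" for k i j l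
    using that by (rule haar_analysis_nilpotent)
  show "(\<Sum>i<block_len k. \<bar>\<Sum>j<block_len k. haar_analysis k i j * \<beta> j\<bar> powr p)
      \<le> (\<Sum>i<block_len k. \<bar>\<beta> i\<bar> powr p)" for k \<beta>
    using assms by (rule haar_analysis_contraction)
qed (use assms block_len_pos in auto)

lemma block_perturbation_haar_synthesis:
  assumes "1 < p" "p \<le> 2"
  shows "block_perturbation block_len p haar_synthesis"
proof unfold_locales
  show "haar_synthesis k j l = 0" if "haar_synthesis k i j \<noteq> 0" for k i j l
    using that by (rule haar_synthesis_nilpotent)
  show "(\<Sum>i<block_len k. \<bar>\<Sum>j<block_len k. haar_synthesis k i j * \<beta> j\<bar> powr p)
      \<le> (\<Sum>i<block_len k. \<bar>\<beta> i\<bar> powr p)" for k \<beta>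
    using assms by (rule haar_synthesis_contraction)
qed (use assms block_len_pos in auto)

theorem proposition4p2:
  fixes p :: real
  assumes "1 < p"
  shows "\<exists>u :: nat \<Rightarrow> nat \<Rightarrow> real.
           schauder_basis p u \<and> equivalent_seq p u canon_basis \<and>
           \<not> bibasic p u \<and> \<not> uniformly_quasi_greedy p u"
proof -
  obtain G where G: "block_perturbation block_len p G" and unbounded: "flat_partial_sums_unbounded p block_len G"
  proof (cases "2 \<le> p")
    case True
    then show thesis
      using that block_perturbation_haar_analysis flat_partial_sums_unbounded_haar_analysis by blast
  next
    case False
    then have "p \<le> 2" by simp
    then show thesis
      using that block_perturbation_haar_synthesis[OF assms] flat_partial_sums_unbounded_haar_synthesis[OF assms]
      by blast
  qed
  interpret block_perturbation block_len p G by (rule G)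
  show ?thesis
    using schauder_basis_u equivalent_u_canon_basis not_bibasic_u[OF unbounded]
      not_uniformly_quasi_greedy_u[OF unbounded] by blast
qed

end
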